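(* Let $G$ be a finite connected graph of minimal degree at least $2$, $W:V(G)\to\mathbb R$, and suppose $G$ has a cycle $(u_0,u_1,\dots,u_m,u_0)$ which does not contain all vertices of $G$. Then for every $\lambda$ in the bulk spectrum, $$\left|\zeta^\lambda_{u_0}(u_1)\zeta^\lambda_{u_1}(u_2)\cdots\zeta^\lambda_{u_{m-1}}(u_m)\zeta^\lambda_{u_m}(u_0)\right|\le 1-\frac{z_\lambda(G)^2}{4}.$$
   Context: $H_G=\mathcal A_G+W$. $(\widetilde G,\widetilde W)$ is the universal cover tree of $G$ with lifted potential and $H_{\widetilde G}=\mathcal A_{\widetilde G}+\widetilde W$. For adjacent $v\sim w$ in the tree, $\zeta^\gamma_w(v)=-(H^{(v|w)}-\gamma)^{-1}(v,v)$ for $\Im\gamma>0$, with $H^{(v|w)}$ the restriction to the component containing $v$ of the tree minus the edge $\{v,w\}$; for an oriented edge $(x,y)$ of $G$, $\zeta^\gamma_y(x):=\zeta^\gamma_{\tilde y}(\tilde x)$ for adjacent lifts, and $\zeta^\lambda_y(x)=\lim_{\eta\downarrow0}\zeta^{\lambda+i\eta}_y(x)$. The spectrum $\sigma(H_{\widetilde G})$ is the disjoint union of finitely many open intervals $J_r$ of absolutely continuous spectrum, a finite set of eigenvalues and the endpoints of the $J_r$; the bulk spectrum is $\bigcup_rJ_r$, where all $\zeta^\lambda_y(x)$ exist with nonzero imaginary part. $z_\lambda(G)=\min_{(x,y)}|\Im\zeta^\lambda_y(x)|$ over oriented edges of $G$. *)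

theory Defs
  imports "HOL-Analysis.Analysis"
begin

definition fin_graph :: "'a set \<Rightarrow> ('a \<Rightarrow> 'a \<Rightarrow> bool) \<Rightarrow> bool" where
  "fin_graph V E \<longleftrightarrow> finite V \<and> V \<noteq> {} \<and>
     (\<forall>x y. E x y \<longrightarrow> x \<in> V \<and> y \<in> V) \<and>
     (\<forall>x y. E x y \<longrightarrow> E y x) \<and> (\<forall>x. \<not> E x x)"

definition graph_connected :: "'a set \<Rightarrow> ('a \<Rightarrow> 'a \<Rightarrow> bool) \<Rightarrow> bool" where
  "graph_connected V E \<longleftrightarrow> (\<forall>x\<in>V. \<forall>y\<in>V. E\<^sup>*\<^sup>* x y)"

definition min_degree_ge :: "'a set \<Rightarrow> ('a \<Rightarrow> 'a \<Rightarrow> bool) \<Rightarrow> nat \<Rightarrow> bool" where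
  "min_degree_ge V E k \<longleftrightarrow> (\<forall>x\<in>V. card {y. E x y} \<ge> k)"

definition is_cycle :: "('a \<Rightarrow> 'a \<Rightarrow> bool) \<Rightarrow> (nat \<Rightarrow> 'a) \<Rightarrow> nat \<Rightarrow> bool" where
  "is_cycle E u m \<longleftrightarrow> m \<ge> 2 \<and> inj_on u {0..m} \<and>
     (\<forall>i<m. E (u i) (u (Suc i))) \<and> E (u m) (u 0)"

text \<open>Vertices of the universal cover tree rooted at r: non-backtracking walks starting at r.\<close>
definition nb_walks :: "('a \<Rightarrow> 'a \<Rightarrow> bool) \<Rightarrow> 'a \<Rightarrow> 'a list set" where
  "nb_walks E r = {p. p \<noteq> [] \<and> hd p = r \<and>
      (\<forall>i. Suc i < length p \<longrightarrow> E (p ! i) (p ! Suc i)) \<and>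
      (\<forall>i. Suc (Suc i) < length p \<longrightarrow> p ! Suc (Suc i) \<noteq> p ! i)}"

definition tree_adj :: "('a \<Rightarrow> 'a \<Rightarrow> bool) \<Rightarrow> 'a \<Rightarrow> 'a list \<Rightarrow> 'a list \<Rightarrow> bool" where
  "tree_adj E r p q \<longleftrightarrow> p \<in> nb_walks E r \<and> q \<in> nb_walks E r \<and>
      ((\<exists>w. q = p @ [w]) \<or> (\<exists>w. p = q @ [w]))"

definition tree_branch :: "('a \<Rightarrow> 'a \<Rightarrow> bool) \<Rightarrow> 'a \<Rightarrow> 'a list \<Rightarrow> 'a list \<Rightarrow> 'a list set" where
  "tree_branch E r v w =
     {u. (\<lambda>a b. tree_adj E r a b \<and> {a, b} \<noteq> {v, w})\<^sup>*\<^sup>* v u}"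

text \<open>Diagonal resolvent entry (H^S - gamma)^{-1}(v,v) of the restriction to S of
  H = adjacency + lifted potential on the tree: the value at v of the unique
  l^2(S) function g with (H^S - gamma) g = delta_v.\<close>
definition tree_green :: "('a \<Rightarrow> 'a \<Rightarrow> bool) \<Rightarrow> ('a \<Rightarrow> real) \<Rightarrow> 'a \<Rightarrow> 'a list set
    \<Rightarrow> complex \<Rightarrow> 'a list \<Rightarrow> complex" where
  "tree_green E W r S \<gamma> v =
     (THE g. (\<forall>x. x \<notin> S \<longrightarrow> g x = 0) \<and>
             (\<lambda>x. (cmod (g x))\<^sup>2) summable_on S \<and>
             (\<forall>x\<in>S. (\<Sum>y\<in>{y\<in>S. tree_adj E r x y}. g y)
                      + (complex_of_real (W (last x)) - \<gamma>) * g x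
                    = (if x = v then 1 else 0))) v"

text \<open>zeta^gamma_y(x) for an oriented edge (x,y) of G, computed on the adjacent
  lifts [y,x] and [y] in the universal cover tree rooted at y.\<close>
definition zeta :: "('a \<Rightarrow> 'a \<Rightarrow> bool) \<Rightarrow> ('a \<Rightarrow> real) \<Rightarrow> complex \<Rightarrow> 'a \<Rightarrow> 'a \<Rightarrow> complex" where
  "zeta E W \<gamma> x y = - tree_green E W y (tree_branch E y [y, x] [y]) \<gamma> [y, x]"

definition zeta_bv :: "('a \<Rightarrow> 'a \<Rightarrow> bool) \<Rightarrow> ('a \<Rightarrow> real) \<Rightarrow> real \<Rightarrow> 'a \<Rightarrow> 'a \<Rightarrow> complex" where
  "zeta_bv E W lam x y = Lim (at_right 0) (\<lambda>\<eta>::real. zeta E W (complex_of_real lam + \<i> * complex_of_real \<eta>) x y)"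

definition bulk_spectrum :: "('a \<Rightarrow> 'a \<Rightarrow> bool) \<Rightarrow> ('a \<Rightarrow> real) \<Rightarrow> real set" where
  "bulk_spectrum E W = {lam. \<forall>x y. E x y \<longrightarrow>
      (\<exists>L. ((\<lambda>\<eta>::real. zeta E W (complex_of_real lam + \<i> * complex_of_real \<eta>) x y) \<longlongrightarrow> L) (at_right 0)
           \<and> Im L \<noteq> 0)}"

definition z_lambda :: "('a \<Rightarrow> 'a \<Rightarrow> bool) \<Rightarrow> ('a \<Rightarrow> real) \<Rightarrow> real \<Rightarrow> real" where
  "z_lambda E W lam = Min {\<bar>Im (zeta_bv E W lam x y)\<bar> | x y. E x y}"

end

theory Submission
  imports Defs
begin

text \<open>For \<open>Im \<gamma> > 0\<close> the values \<open>\<zeta>\<^sup>\<gamma>\<^sub>y(x)\<close> are the fixed point, in the lower half plane,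
  of the recursion \<open>\<zeta>\<^sub>y(x) = 1 / (\<gamma> - W(x) - \<Sum>\<^sub>c \<zeta>\<^sub>x(c))\<close> over the neighbours \<open>c \<noteq> y\<close> of \<open>x\<close>:
  the recursion contracts the weighted distance \<open>|\<zeta> - \<xi>|\<^sup>2 / (Im \<zeta> Im \<xi>)\<close>, and the products of
  the fixed point along the paths of a branch of the universal cover form an \<open>\<ell>\<^sup>2\<close> solution of
  the resolvent equation on that branch, which is the only one.
  Taking imaginary parts in the recursion and letting \<open>\<gamma> \<rightarrow> \<lambda>\<close> in the bulk spectrum gives the
  conservation law \<open>-Im \<zeta>\<^sub>y(x) = |\<zeta>\<^sub>y(x)|\<^sup>2 \<Sum>\<^sub>c -Im \<zeta>\<^sub>x(c)\<close>.
  Going around the cycle, each edge therefore carries at least \<open>|\<zeta>|\<^sup>2\<close> times the flux of the next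
  edge, and \<open>z\<^sub>\<lambda>\<close> more at a cycle vertex with a neighbour off the cycle, which exists by
  connectivity. Multiplying around the cycle gives \<open>P (t + z) \<le> t\<close> for \<open>P = |\<Prod> \<zeta>|\<^sup>2\<close> and some
  \<open>z \<le> t \<le> 1 / z\<close>, whence \<open>P \<le> 1 / (1 + z\<^sup>2) \<le> (1 - z\<^sup>2 / 4)\<^sup>2\<close>.\<close>

section \<open>Non-backtracking walks and branches of the universal cover\<close>

lemma adjacent_pairs_snoc_iff:
  "(\<forall>i. Suc i < length (p @ [w]) \<longrightarrow> R ((p @ [w]) ! i) ((p @ [w]) ! Suc i)) \<longleftrightarrow>
   (\<forall>i. Suc i < length p \<longrightarrow> R (p ! i) (p ! Suc i)) \<and> (p \<noteq> [] \<longrightarrow> R (last p) w)"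
proof -
  have "(\<forall>i. Suc i < length (p @ [w]) \<longrightarrow> R ((p @ [w]) ! i) ((p @ [w]) ! Suc i)) \<longleftrightarrow>
     (\<forall>i. Suc i < length p \<longrightarrow> R (p ! i) (p ! Suc i)) \<and> (\<forall>i. Suc i = length p \<longrightarrow> R (p ! i) w)"
    by (auto simp: nth_append less_Suc_eq)
  also have "(\<forall>i. Suc i = length p \<longrightarrow> R (p ! i) w) \<longleftrightarrow> (p \<noteq> [] \<longrightarrow> R (last p) w)"
    by (cases p rule: rev_cases) auto
  finally show ?thesis .
qed

lemma no_backtrack_snoc_iff:
  "(\<forall>i. Suc (Suc i) < length (p @ [w]) \<longrightarrow> (p @ [w]) ! Suc (Suc i) \<noteq> (p @ [w]) ! i) \<longleftrightarrow>
   (\<forall>i. Suc (Suc i) < length p \<longrightarrow> p ! Suc (Suc i) \<noteq> p ! i) \<and> (2 \<le> length p \<longrightarrow> w \<noteq> p ! (length p - 2))"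
proof -
  have "(\<forall>i. Suc (Suc i) < length (p @ [w]) \<longrightarrow> (p @ [w]) ! Suc (Suc i) \<noteq> (p @ [w]) ! i) \<longleftrightarrow>
     (\<forall>i. Suc (Suc i) < length p \<longrightarrow> p ! Suc (Suc i) \<noteq> p ! i) \<and> (\<forall>i. Suc (Suc i) = length p \<longrightarrow> w \<noteq> p ! i)"
    by (auto simp: nth_append less_Suc_eq)
  also have "(\<forall>i. Suc (Suc i) = length p \<longrightarrow> w \<noteq> p ! i) \<longleftrightarrow> (2 \<le> length p \<longrightarrow> w \<noteq> p ! (length p - 2))"
    by (cases p rule: rev_cases; cases "butlast p" rule: rev_cases) auto
  finally show ?thesis .
qed

locale finite_graph =
  fixes V :: "'a set" and E :: "'a \<Rightarrow> 'a \<Rightarrow> bool"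
  assumes fin_graph: "fin_graph V E"
begin

lemma finite_vertices: "finite V"
  using fin_graph by (simp add: fin_graph_def)

lemma edge_vertices: "E x y \<Longrightarrow> x \<in> V \<and> y \<in> V"
  using fin_graph by (simp add: fin_graph_def)

lemma edge_sym: "E x y \<Longrightarrow> E y x"
  using fin_graph by (simp add: fin_graph_def)

lemma finite_edges: "finite {(x, y). E x y}"
  by (rule finite_subset[of _ "V \<times> V"]) (auto simp: edge_vertices finite_vertices)

definition children :: "'a \<Rightarrow> 'a \<Rightarrow> 'a set" where
  "children x y = {z. E x z \<and> z \<noteq> y}"

lemma children_edge: "c \<in> children x y \<Longrightarrow> E c x"
  by (simp add: children_def edge_sym)

lemma children_subset_vertices: "children x y \<subseteq> V"
  using edge_vertices by (auto simp: children_def)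

lemma finite_children: "finite (children x y)"
  using children_subset_vertices finite_vertices finite_subset by blast

lemma card_children_le: "card (children x y) \<le> card V"
  using children_subset_vertices finite_vertices card_mono by blast

lemma nb_walks_snoc_iff:
  assumes "p \<in> nb_walks E r"
  shows "p @ [w] \<in> nb_walks E r \<longleftrightarrow>
           E (last p) w \<and> (2 \<le> length p \<longrightarrow> w \<noteq> p ! (length p - 2))"
  using assms unfolding nb_walks_def mem_Collect_eq adjacent_pairs_snoc_iff no_backtrack_snoc_iff by auto

lemma nb_walks_butlast:
  assumes "p \<in> nb_walks E r" "2 \<le> length p"
  shows "butlast p \<in> nb_walks E r"
proof -
  have ne: "butlast p \<noteq> []"
    using assms(2) by (cases p) auto
  then have "hd (butlast p) = hd p"
    by (metis append_butlast_last_id hd_append2 butlast.simps(1))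
  then show ?thesis
    using assms ne unfolding nb_walks_def by (auto simp: nth_butlast)
qed

lemma nb_walks_subset_vertices:
  assumes "p \<in> nb_walks E r" "2 \<le> length p"
  shows "set p \<subseteq> V"
proof
  fix a assume "a \<in> set p"
  then obtain i where i: "i < length p" "a = p ! i"
    by (auto simp: in_set_conv_nth)
  show "a \<in> V"
  proof (cases "Suc i < length p")
    case True
    then have "E (p ! i) (p ! Suc i)"
      using assms by (auto simp: nb_walks_def)
    then show ?thesis using edge_vertices i by auto
  next
    case False
    then have "Suc (i - 1) < length p" "Suc (i - 1) = i"
      using assms i by auto
    then have "E (p ! (i - 1)) (p ! i)"
      using assms(1) unfolding nb_walks_def by (metis (no_types, lifting) mem_Collect_eq)
    then show ?thesis using edge_vertices i by auto
  qed
qed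

definition branch :: "'a \<Rightarrow> 'a \<Rightarrow> 'a list set" where
  "branch y x = {p \<in> nb_walks E y. 2 \<le> length p \<and> p ! 1 = x}"

definition tip_children :: "'a list \<Rightarrow> 'a set" where
  "tip_children p = children (last p) (p ! (length p - 2))"

definition sphere :: "'a \<Rightarrow> 'a \<Rightarrow> nat \<Rightarrow> 'a list set" where
  "sphere y x k = {p \<in> branch y x. length p = k}"

definition branch_upto :: "'a \<Rightarrow> 'a \<Rightarrow> nat \<Rightarrow> 'a list set" where
  "branch_upto y x n = {p \<in> branch y x. length p \<le> n}"

lemma finite_tip_children: "finite (tip_children p)"
  by (simp add: tip_children_def finite_children)

lemma tip_children_snoc: "p \<noteq> [] \<Longrightarrow> tip_children (p @ [w]) = children w (last p)"
  by (simp add: tip_children_def nth_append last_conv_nth)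

lemma branch_length: "p \<in> branch y x \<Longrightarrow> 2 \<le> length p"
  by (simp add: branch_def)

lemma branch_snoc_iff:
  assumes "p \<in> branch y x"
  shows "p @ [w] \<in> branch y x \<longleftrightarrow> w \<in> tip_children p"
proof -
  have p: "p \<in> nb_walks E y" "2 \<le> length p" "p ! 1 = x"
    using assms by (auto simp: branch_def)
  then have "(p @ [w]) ! 1 = p ! 1"
    by (simp add: nth_append)
  then show ?thesis
    using nb_walks_snoc_iff[OF p(1)] p by (auto simp: branch_def tip_children_def children_def)
qed

lemma branch_butlast:
  assumes "p \<in> branch y x" "3 \<le> length p"
  shows "butlast p \<in> branch y x" and "p = butlast p @ [last p]"
    and "last p \<in> tip_children (butlast p)"
proof -
  have p: "p \<in> nb_walks E y" "2 \<le> length p" "p ! 1 = x"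
    using assms by (auto simp: branch_def)
  show bl: "butlast p \<in> branch y x"
    using nb_walks_butlast[OF p(1,2)] p assms(2) by (auto simp: branch_def nth_butlast)
  show p_eq: "p = butlast p @ [last p]"
    using p(2) by (cases p) auto
  show "last p \<in> tip_children (butlast p)"
    using branch_snoc_iff[OF bl, of "last p"] p_eq assms(1) by simp
qed

lemma branch_root: "E y x \<Longrightarrow> [y, x] \<in> branch y x"
  by (auto simp: branch_def nb_walks_def less_Suc_eq nth_Cons split: nat.splits)

lemma branch_length_two: "p \<in> branch y x \<Longrightarrow> length p = 2 \<Longrightarrow> p = [y, x]"
  by (auto simp: branch_def nb_walks_def numeral_2_eq_2 length_Suc_conv)

lemma branch_last_edge:
  assumes "p \<in> branch y x"
  shows "E (last p) (p ! (length p - 2))"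
proof -
  have p: "p \<in> nb_walks E y" "2 \<le> length p"
    using assms by (auto simp: branch_def)
  then have "E (p ! (length p - 2)) (p ! Suc (length p - 2))"
    by (auto simp: nb_walks_def)
  moreover have "p \<noteq> []" "Suc (length p - 2) = length p - 1"
    using p(2) by auto
  ultimately show ?thesis
    using edge_sym by (simp add: last_conv_nth)
qed

lemma branch_adj_closed:
  assumes a: "a \<in> branch y x" and adj: "tree_adj E y a b" and "{a, b} \<noteq> {[y, x], [y]}"
  shows "b \<in> branch y x"
proof -
  have a_walk: "a \<in> nb_walks E y" "2 \<le> length a" "a ! 1 = x"
    using a by (auto simp: branch_def)
  have b_walk: "b \<in> nb_walks E y"
    using adj by (simp add: tree_adj_def)
  consider (ext) w where "b = a @ [w]" | (red) w where "a = b @ [w]"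
    using adj by (auto simp: tree_adj_def)
  then show ?thesis
  proof cases
    case ext
    then show ?thesis using a_walk b_walk by (auto simp: branch_def nth_append)
  next
    case red
    show ?thesis
    proof (cases "length a = 2")
      case True
      then have "a = [y, x]"
        using branch_length_two a by blast
      then have "b = [y]"
        using red by (cases b) auto
      with \<open>a = [y, x]\<close> show ?thesis
        using \<open>{a, b} \<noteq> {[y, x], [y]}\<close> by simp
    next
      case False
      then show ?thesis using a_walk b_walk red by (auto simp: branch_def nth_append)
    qed
  qed
qed

lemma tree_branch_subset_branch:
  assumes "E y x"
  shows "tree_branch E y [y, x] [y] \<subseteq> branch y x"
proof
  fix q assume "q \<in> tree_branch E y [y, x] [y]"
  then have "(\<lambda>a b. tree_adj E y a b \<and> {a, b} \<noteq> {[y, x], [y]})\<^sup>*\<^sup>* [y, x] q"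
    by (simp add: tree_branch_def)
  then show "q \<in> branch y x"
    by (induction rule: rtranclp_induct) (auto intro: branch_root[OF assms] branch_adj_closed)
qed

lemma branch_subset_tree_branch: "branch y x \<subseteq> tree_branch E y [y, x] [y]"
proof
  fix p assume "p \<in> branch y x"
  then show "p \<in> tree_branch E y [y, x] [y]"
  proof (induction "length p" arbitrary: p rule: less_induct)
    case less
    show ?case
    proof (cases "length p = 2")
      case True
      then show ?thesis
        using branch_length_two[OF less.prems] by (simp add: tree_branch_def)
    next
      case False
      then have long: "3 \<le> length p"
        using branch_length[OF less.prems] by simp
      note bl = branch_butlast[OF less.prems long]
      have "butlast p \<in> tree_branch E y [y, x] [y]"
        using less.hyps[OF _ bl(1)] long by simp
      moreover have "tree_adj E y (butlast p) p"
        using bl less.prems unfolding tree_adj_def branch_def by blast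
      moreover have "{butlast p, p} \<noteq> {[y, x], [y]}"
        using long by (auto simp: doubleton_eq_iff)
      ultimately show ?thesis
        unfolding tree_branch_def by (simp add: rtranclp.rtrancl_into_rtrancl)
    qed
  qed
qed

lemma tree_branch_eq_branch: "E y x \<Longrightarrow> tree_branch E y [y, x] [y] = branch y x"
  using tree_branch_subset_branch branch_subset_tree_branch by blast

lemma branch_neighbours:
  assumes "p \<in> branch y x"
  shows "{q \<in> branch y x. tree_adj E y p q} =
         (\<lambda>w. p @ [w]) ` tip_children p \<union> (if 3 \<le> length p then {butlast p} else {})"
proof (intro set_eqI iffI)
  fix q assume q: "q \<in> {q \<in> branch y x. tree_adj E y p q}"
  then have q_branch: "q \<in> branch y x" by simp
  consider (ext) w where "q = p @ [w]" | (red) w where "p = q @ [w]"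
    using q by (auto simp: tree_adj_def)
  then show "q \<in> (\<lambda>w. p @ [w]) ` tip_children p \<union> (if 3 \<le> length p then {butlast p} else {})"
  proof cases
    case ext
    then show ?thesis using branch_snoc_iff[OF assms] q_branch by auto
  next
    case red
    then show ?thesis using branch_length[OF q_branch] by simp
  qed
next
  fix q assume q: "q \<in> (\<lambda>w. p @ [w]) ` tip_children p \<union> (if 3 \<le> length p then {butlast p} else {})"
  have p_walk: "p \<in> nb_walks E y"
    using assms by (simp add: branch_def)
  show "q \<in> {q \<in> branch y x. tree_adj E y p q}"
  proof (cases "q \<in> (\<lambda>w. p @ [w]) ` tip_children p")
    case True
    then obtain w where w: "w \<in> tip_children p" "q = p @ [w]" by auto
    then have "q \<in> branch y x" using branch_snoc_iff[OF assms] by simp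
    then show ?thesis using w p_walk by (auto simp: tree_adj_def branch_def)
  next
    case False
    then have long: "3 \<le> length p" and "q = butlast p"
      using q by (auto split: if_splits)
    then show ?thesis
      using branch_butlast[OF assms long] p_walk unfolding tree_adj_def branch_def by auto
  qed
qed

lemma sum_branch_neighbours:
  assumes "p \<in> branch y x"
  shows "(\<Sum>q\<in>{q \<in> branch y x. tree_adj E y p q}. f q)
       = (\<Sum>w\<in>tip_children p. f (p @ [w])) + (if 3 \<le> length p then f (butlast p) else 0)"
proof -
  have "(\<lambda>w. p @ [w]) ` tip_children p \<inter> (if 3 \<le> length p then {butlast p} else {}) = {}"
    by (auto dest: arg_cong[of _ _ length])
  then have "(\<Sum>q\<in>{q \<in> branch y x. tree_adj E y p q}. f q)
      = (\<Sum>q\<in>(\<lambda>w. p @ [w]) ` tip_children p. f q)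
        + (\<Sum>q\<in>(if 3 \<le> length p then {butlast p} else {}). f q)"
    unfolding branch_neighbours[OF assms]
    by (intro sum.union_disjoint) (auto simp: finite_tip_children)
  also have "(\<Sum>q\<in>(\<lambda>w. p @ [w]) ` tip_children p. f q) = (\<Sum>w\<in>tip_children p. f (p @ [w]))"
    by (rule sum.reindex_cong[where l = "\<lambda>w. p @ [w]"]) (auto simp: inj_on_def)
  finally show ?thesis by simp
qed

lemma finite_sphere: "finite (sphere y x k)"
proof (rule finite_subset)
  show "sphere y x k \<subseteq> {p. set p \<subseteq> V \<and> length p = k}"
    using nb_walks_subset_vertices by (auto simp: sphere_def branch_def)
  show "finite {p. set p \<subseteq> V \<and> length p = k}"
    by (rule finite_lists_length_eq[OF finite_vertices])
qed

lemma sphere_Suc: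
  assumes "2 \<le> k"
  shows "sphere y x (Suc k) = (\<lambda>(p, w). p @ [w]) ` (SIGMA p:sphere y x k. tip_children p)"
proof (intro set_eqI iffI)
  fix q assume q: "q \<in> sphere y x (Suc k)"
  then have q_branch: "q \<in> branch y x" and len: "length q = Suc k"
    by (auto simp: sphere_def)
  then have long: "3 \<le> length q" using assms by simp
  note bl = branch_butlast[OF q_branch long]
  have "(butlast q, last q) \<in> (SIGMA p:sphere y x k. tip_children p)"
    using bl len by (auto simp: sphere_def)
  then show "q \<in> (\<lambda>(p, w). p @ [w]) ` (SIGMA p:sphere y x k. tip_children p)"
    using bl(2) by (metis (no_types, lifting) case_prod_conv image_eqI)
next
  fix q assume "q \<in> (\<lambda>(p, w). p @ [w]) ` (SIGMA p:sphere y x k. tip_children p)"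
  then obtain p w where "p \<in> sphere y x k" "w \<in> tip_children p" "q = p @ [w]"
    by auto
  then show "q \<in> sphere y x (Suc k)"
    using branch_snoc_iff by (auto simp: sphere_def)
qed

lemma sum_sphere_Suc:
  assumes "2 \<le> k"
  shows "(\<Sum>q\<in>sphere y x (Suc k). f q) = (\<Sum>p\<in>sphere y x k. \<Sum>w\<in>tip_children p. f (p @ [w]))"
proof -
  have "(\<Sum>q\<in>sphere y x (Suc k). f q) = (\<Sum>(p, w)\<in>(SIGMA p:sphere y x k. tip_children p). f (p @ [w]))"
    unfolding sphere_Suc[OF assms]
    by (rule sum.reindex_cong[where l = "\<lambda>(p, w). p @ [w]"]) (auto simp: inj_on_def)
  also have "\<dots> = (\<Sum>p\<in>sphere y x k. \<Sum>w\<in>tip_children p. f (p @ [w]))"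
    by (rule sum.Sigma[symmetric]) (auto simp: finite_sphere finite_tip_children)
  finally show ?thesis .
qed

lemma branch_upto_eq_UN: "branch_upto y x n = (\<Union>k\<in>{2..n}. sphere y x k)"
  using branch_length by (auto simp: branch_upto_def sphere_def)

lemma finite_branch_upto: "finite (branch_upto y x n)"
  unfolding branch_upto_eq_UN using finite_sphere by auto

lemma sum_branch_upto: "(\<Sum>p\<in>branch_upto y x n. f p) = (\<Sum>k=2..n. \<Sum>p\<in>sphere y x k. f p)"
  unfolding branch_upto_eq_UN
  by (rule sum.UNION_disjoint) (auto simp: finite_sphere[unfolded sphere_def] sphere_def)

lemma nonneg_summable_on_branch_iff:
  fixes f :: "'a list \<Rightarrow> real"
  assumes "\<And>p. f p \<ge> 0"
  shows "f summable_on branch y x \<longleftrightarrow> (\<exists>B. \<forall>n. (\<Sum>p\<in>branch_upto y x n. f p) \<le> B)"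
proof
  assume "f summable_on branch y x"
  then have "(\<Sum>p\<in>branch_upto y x n. f p) \<le> infsum f (branch y x)" for n
    using assms by (intro finite_sum_le_infsum finite_branch_upto) (auto simp: branch_upto_def)
  then show "\<exists>B. \<forall>n. (\<Sum>p\<in>branch_upto y x n. f p) \<le> B"
    by blast
next
  assume "\<exists>B. \<forall>n. (\<Sum>p\<in>branch_upto y x n. f p) \<le> B"
  then obtain B where B: "\<And>n. (\<Sum>p\<in>branch_upto y x n. f p) \<le> B"
    by blast
  have "sum f F \<le> B" if F: "finite F" "F \<subseteq> branch y x" for F
  proof -
    have "F \<subseteq> branch_upto y x (Max (length ` F))"
      using F by (auto simp: branch_upto_def)
    then have "sum f F \<le> (\<Sum>p\<in>branch_upto y x (Max (length ` F)). f p)"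
      using assms by (intro sum_mono2 finite_branch_upto)
    then show ?thesis using B by (rule order.trans)
  qed
  then show "f summable_on branch y x"
    using assms by (intro nonneg_bdd_above_summable_on bdd_aboveI2) auto
qed

end

section \<open>The recursion for \<open>\<zeta>\<close> and its fixed point\<close>

lemma Im_inverse_eq_norm_sq: "(d::complex) \<noteq> 0 \<Longrightarrow> - Im (1 / d) = (cmod (1 / d))\<^sup>2 * Im d"
  by (simp add: Im_divide norm_divide power_divide cmod_power2 divide_simps)

lemma norm_sum_sq_le_mult_sums:
  fixes d :: "'i \<Rightarrow> complex"
  assumes "\<And>c. c \<in> C \<Longrightarrow> a c \<ge> 0 \<and> b c \<ge> 0"
    and "\<And>c. c \<in> C \<Longrightarrow> (cmod (d c))\<^sup>2 \<le> Q * a c * b c" and "Q \<ge> 0"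
  shows "(cmod (\<Sum>c\<in>C. d c))\<^sup>2 \<le> Q * ((\<Sum>c\<in>C. a c) * (\<Sum>c\<in>C. b c))"
proof -
  have "cmod (d c) \<le> sqrt Q * (sqrt (a c) * sqrt (b c))" if "c \<in> C" for c
    using real_sqrt_le_mono[OF assms(2)[OF that]] by (simp add: real_sqrt_mult)
  then have "cmod (\<Sum>c\<in>C. d c) \<le> sqrt Q * (\<Sum>c\<in>C. sqrt (a c) * sqrt (b c))"
    unfolding sum_distrib_left by (intro order.trans[OF norm_sum] sum_mono)
  then have "(cmod (\<Sum>c\<in>C. d c))\<^sup>2 \<le> Q * (\<Sum>c\<in>C. sqrt (a c) * sqrt (b c))\<^sup>2"
    using power_mono[of _ _ 2] assms(3) by (fastforce simp: power_mult_distrib)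
  also have "(\<Sum>c\<in>C. sqrt (a c) * sqrt (b c))\<^sup>2 \<le> (\<Sum>c\<in>C. (sqrt (a c))\<^sup>2) * (\<Sum>c\<in>C. (sqrt (b c))\<^sup>2)"
    by (rule Cauchy_Schwarz_ineq_sum)
  also have "\<dots> = (\<Sum>c\<in>C. a c) * (\<Sum>c\<in>C. b c)"
    using assms(1) by (simp cong: sum.cong)
  finally show ?thesis
    using assms(3) by (simp add: mult_left_mono)
qed

lemma norm_diff_sq_summable_on:
  fixes f g :: "'b \<Rightarrow> 'c::real_normed_vector"
  assumes "(\<lambda>q. (norm (f q))\<^sup>2) summable_on A" "(\<lambda>q. (norm (g q))\<^sup>2) summable_on A"
  shows "(\<lambda>q. (norm (f q - g q))\<^sup>2) summable_on A"
proof (rule summable_on_comparison_test)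
  show "(\<lambda>q. 2 * (norm (f q))\<^sup>2 + 2 * (norm (g q))\<^sup>2) summable_on A"
    using assms by (intro summable_on_add summable_on_cmult_right)
  show "(norm (f q - g q))\<^sup>2 \<le> 2 * (norm (f q))\<^sup>2 + 2 * (norm (g q))\<^sup>2" for q
  proof -
    have "(norm (f q - g q))\<^sup>2 \<le> (norm (f q) + norm (g q))\<^sup>2"
      by (intro power_mono norm_triangle_ineq4) simp
    then show ?thesis
      using sum_squares_bound[of "norm (f q)" "norm (g q)"] by (simp add: power2_sum)
  qed
qed simp

context finite_graph
begin

text \<open>As in \<open>zeta\<close>, \<open>\<zeta> x y\<close> stands for \<open>\<zeta>\<^sub>y(x)\<close>, so the fixed points of \<open>zeta_map\<close>
  are the solutions of the recursion for \<open>\<zeta>\<close>.\<close>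

definition zeta_den :: "('a \<Rightarrow> real) \<Rightarrow> complex \<Rightarrow> ('a \<Rightarrow> 'a \<Rightarrow> complex) \<Rightarrow> 'a \<Rightarrow> 'a \<Rightarrow> complex"
  where "zeta_den W \<gamma> \<zeta> x y = \<gamma> - complex_of_real (W x) - (\<Sum>c\<in>children x y. \<zeta> c x)"

definition zeta_map :: "('a \<Rightarrow> real) \<Rightarrow> complex \<Rightarrow> ('a \<Rightarrow> 'a \<Rightarrow> complex) \<Rightarrow> 'a \<Rightarrow> 'a \<Rightarrow> complex"
  where "zeta_map W \<gamma> \<zeta> x y = 1 / zeta_den W \<gamma> \<zeta> x y"

definition nonpos_Im :: "('a \<Rightarrow> 'a \<Rightarrow> complex) \<Rightarrow> bool"
  where "nonpos_Im \<zeta> \<longleftrightarrow> (\<forall>x y. E x y \<longrightarrow> Im (\<zeta> x y) \<le> 0)"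

definition contraction_factor :: "complex \<Rightarrow> real"
  where "contraction_factor \<gamma> = card V / ((Im \<gamma>)\<^sup>2 + card V)"

lemma contraction_factor_bounds: "Im \<gamma> > 0 \<Longrightarrow> 0 \<le> contraction_factor \<gamma> \<and> contraction_factor \<gamma> < 1"
  by (simp add: contraction_factor_def add_pos_nonneg)

lemma Im_zeta_den: "Im (zeta_den W \<gamma> \<zeta> x y) = Im \<gamma> + (\<Sum>c\<in>children x y. - Im (\<zeta> c x))"
  by (simp add: zeta_den_def Im_sum sum_negf)

lemma sum_children_neg_Im_nonneg: "nonpos_Im \<zeta> \<Longrightarrow> 0 \<le> (\<Sum>c\<in>children x y. - Im (\<zeta> c x))"
  using children_edge by (intro sum_nonneg) (auto simp: nonpos_Im_def)

lemma Im_zeta_den_ge: "nonpos_Im \<zeta> \<Longrightarrow> Im \<gamma> \<le> Im (zeta_den W \<gamma> \<zeta> x y)"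
  using sum_children_neg_Im_nonneg by (simp add: Im_zeta_den)

lemma Im_zeta_den_pos: "nonpos_Im \<zeta> \<Longrightarrow> Im \<gamma> > 0 \<Longrightarrow> Im (zeta_den W \<gamma> \<zeta> x y) > 0"
  using Im_zeta_den_ge by (rule order.strict_trans2[rotated])

lemma zeta_den_nonzero: "nonpos_Im \<zeta> \<Longrightarrow> Im \<gamma> > 0 \<Longrightarrow> zeta_den W \<gamma> \<zeta> x y \<noteq> 0"
  by (metis Im_zeta_den_pos zero_complex.simps(2) less_irrefl)

lemma norm_zeta_map_le:
  assumes "nonpos_Im \<zeta>" "Im \<gamma> > 0"
  shows "cmod (zeta_map W \<gamma> \<zeta> x y) \<le> 1 / Im \<gamma>"
proof -
  have "Im \<gamma> \<le> cmod (zeta_den W \<gamma> \<zeta> x y)"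
    using Im_zeta_den_ge[OF assms(1)] abs_Im_le_cmod by (rule order.trans[OF _ order.trans[OF abs_ge_self]])
  then show ?thesis
    using assms(2) by (simp add: zeta_map_def norm_divide frac_le)
qed

lemma neg_Im_zeta_map:
  assumes "nonpos_Im \<zeta>" "Im \<gamma> > 0"
  shows "- Im (zeta_map W \<gamma> \<zeta> x y) = (cmod (zeta_map W \<gamma> \<zeta> x y))\<^sup>2 * Im (zeta_den W \<gamma> \<zeta> x y)"
  unfolding zeta_map_def by (rule Im_inverse_eq_norm_sq[OF zeta_den_nonzero[OF assms]])

lemma neg_Im_zeta_map_pos:
  assumes "nonpos_Im \<zeta>" "Im \<gamma> > 0"
  shows "- Im (zeta_map W \<gamma> \<zeta> x y) > 0"
  unfolding neg_Im_zeta_map[OF assms]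
  using zeta_den_nonzero[OF assms] Im_zeta_den_pos[OF assms] by (simp add: zeta_map_def)

lemma nonpos_Im_zeta_map: "nonpos_Im \<zeta> \<Longrightarrow> Im \<gamma> > 0 \<Longrightarrow> nonpos_Im (zeta_map W \<gamma> \<zeta>)"
  using neg_Im_zeta_map_pos unfolding nonpos_Im_def by (metis less_eq_real_def neg_0_less_iff_less)

lemma sum_children_neg_Im_le_factor:
  fixes x y :: 'a
  assumes "nonpos_Im \<zeta>" "Im \<gamma> > 0" and bound: "\<And>a b. E a b \<Longrightarrow> cmod (\<zeta> a b) \<le> 1 / Im \<gamma>"
  defines "A \<equiv> \<Sum>c\<in>children x y. - Im (\<zeta> c x)"
  shows "A \<le> contraction_factor \<gamma> * (Im \<gamma> + A)"
proof -
  have "A \<le> (\<Sum>c\<in>children x y. 1 / Im \<gamma>)"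
    unfolding A_def using bound[OF children_edge] abs_Im_le_cmod
    by (intro sum_mono) (smt (verit))
  also have "\<dots> \<le> card V / Im \<gamma>"
    using card_children_le assms(2) by (simp add: divide_right_mono)
  finally have "A * Im \<gamma> \<le> card V"
    using assms(2) by (simp add: field_simps)
  then have "A * ((Im \<gamma>)\<^sup>2 + card V) \<le> card V * (Im \<gamma> + A)"
    using assms(2) by (simp add: power2_eq_square algebra_simps mult_left_mono)
  moreover have "(Im \<gamma>)\<^sup>2 + card V > 0"
    using assms(2) by (simp add: add_pos_nonneg)
  ultimately show ?thesis
    by (simp add: contraction_factor_def pos_le_divide_eq)
qed

lemma zeta_map_contraction:
  assumes nonpos: "nonpos_Im \<zeta>" "nonpos_Im \<xi>" and \<gamma>: "Im \<gamma> > 0"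
    and bounds: "\<And>x y. cmod (\<zeta> x y) \<le> 1 / Im \<gamma>" "\<And>x y. cmod (\<xi> x y) \<le> 1 / Im \<gamma>"
    and dist: "\<And>x y. E x y \<Longrightarrow> (cmod (\<zeta> x y - \<xi> x y))\<^sup>2 \<le> Q * (- Im (\<zeta> x y)) * (- Im (\<xi> x y))"
    and "Q \<ge> 0"
  shows "(cmod (zeta_map W \<gamma> \<zeta> x y - zeta_map W \<gamma> \<xi> x y))\<^sup>2
      \<le> (contraction_factor \<gamma>)\<^sup>2 * Q * (- Im (zeta_map W \<gamma> \<zeta> x y)) * (- Im (zeta_map W \<gamma> \<xi> x y))"
proof -
  define \<kappa> where "\<kappa> = contraction_factor \<gamma>"
  define dz where "dz = zeta_den W \<gamma> \<zeta> x y"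
  define dx where "dx = zeta_den W \<gamma> \<xi> x y"
  define A where "A = (\<Sum>c\<in>children x y. - Im (\<zeta> c x))"
  define B where "B = (\<Sum>c\<in>children x y. - Im (\<xi> c x))"
  define S where "S = (\<Sum>c\<in>children x y. \<zeta> c x - \<xi> c x)"
  have nonzero: "dz \<noteq> 0" "dx \<noteq> 0"
    using zeta_den_nonzero[OF nonpos(1) \<gamma>] zeta_den_nonzero[OF nonpos(2) \<gamma>] by (auto simp: dz_def dx_def)
  have S_le_AB: "(cmod S)\<^sup>2 \<le> Q * (A * B)"
    unfolding S_def A_def B_def using nonpos children_edge dist \<open>Q \<ge> 0\<close>
    by (intro norm_sum_sq_le_mult_sums) (auto simp: nonpos_Im_def)
  have "A * B \<le> (\<kappa> * (Im \<gamma> + A)) * (\<kappa> * (Im \<gamma> + B))"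
    using sum_children_neg_Im_le_factor[OF nonpos(1) \<gamma>] sum_children_neg_Im_le_factor[OF nonpos(2) \<gamma>]
      sum_children_neg_Im_nonneg[OF nonpos(1)] sum_children_neg_Im_nonneg[OF nonpos(2)] bounds
      contraction_factor_bounds[OF \<gamma>] \<gamma>
    unfolding A_def B_def \<kappa>_def by (intro mult_mono) auto
  then have "Q * (A * B) \<le> \<kappa>\<^sup>2 * Q * Im dz * Im dx"
    using \<open>Q \<ge> 0\<close> mult_left_mono
    by (fastforce simp: Im_zeta_den dz_def dx_def A_def B_def power2_eq_square ac_simps)
  with S_le_AB have S_le: "(cmod S)\<^sup>2 \<le> \<kappa>\<^sup>2 * Q * Im dz * Im dx"
    by linarith
  have "1 / dz - 1 / dx = S * (1 / dz) * (1 / dx)"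
    using nonzero by (simp add: dx_def dz_def zeta_den_def S_def sum_subtractf field_simps)
  then have "(cmod (zeta_map W \<gamma> \<zeta> x y - zeta_map W \<gamma> \<xi> x y))\<^sup>2 = (cmod S)\<^sup>2 * (cmod (1/dz))\<^sup>2 * (cmod (1/dx))\<^sup>2"
    by (simp add: zeta_map_def dz_def dx_def norm_mult norm_divide power_mult_distrib power_divide)
  also have "\<dots> \<le> (\<kappa>\<^sup>2 * Q * Im dz * Im dx) * (cmod (1/dz))\<^sup>2 * (cmod (1/dx))\<^sup>2"
    using S_le by (simp add: mult_right_mono)
  also have "\<dots> = \<kappa>\<^sup>2 * Q * (- Im (zeta_map W \<gamma> \<zeta> x y)) * (- Im (zeta_map W \<gamma> \<xi> x y))"
    using Im_inverse_eq_norm_sq[OF nonzero(1)] Im_inverse_eq_norm_sq[OF nonzero(2)]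
    by (simp add: zeta_map_def dz_def dx_def)
  finally show ?thesis
    unfolding \<kappa>_def .
qed

definition zeta_fixpoint :: "('a \<Rightarrow> real) \<Rightarrow> complex \<Rightarrow> ('a \<Rightarrow> 'a \<Rightarrow> complex) \<Rightarrow> bool"
  where "zeta_fixpoint W \<gamma> \<zeta> \<longleftrightarrow> nonpos_Im \<zeta> \<and> (\<forall>x y. E x y \<longrightarrow> \<zeta> x y = zeta_map W \<gamma> \<zeta> x y)"

text \<open>The iteration starts at \<open>zeta_map W \<gamma> 0\<close> rather than at \<open>0\<close>, so that every iterate
  has strictly negative imaginary part and the weighted distance of the contraction is finite.\<close>

definition zeta_iter :: "('a \<Rightarrow> real) \<Rightarrow> complex \<Rightarrow> nat \<Rightarrow> 'a \<Rightarrow> 'a \<Rightarrow> complex"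
  where "zeta_iter W \<gamma> n = (zeta_map W \<gamma> ^^ Suc n) (\<lambda>_ _. 0)"

lemma zeta_iter_Suc: "zeta_iter W \<gamma> (Suc n) = zeta_map W \<gamma> (zeta_iter W \<gamma> n)"
  by (simp add: zeta_iter_def)

lemma nonpos_Im_zeta_iter: "Im \<gamma> > 0 \<Longrightarrow> nonpos_Im (zeta_iter W \<gamma> n)"
proof (induction n)
  case 0
  have "nonpos_Im (\<lambda>_ _. 0)"
    by (simp add: nonpos_Im_def)
  then show ?case
    using nonpos_Im_zeta_map[OF _ 0] by (simp add: zeta_iter_def)
qed (simp add: zeta_iter_Suc nonpos_Im_zeta_map)

lemma zeta_iter_bounds:
  assumes "Im \<gamma> > 0"
  shows "cmod (zeta_iter W \<gamma> n x y) \<le> 1 / Im \<gamma>" and "- Im (zeta_iter W \<gamma> n x y) > 0"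
proof -
  obtain \<zeta> where "nonpos_Im \<zeta>" "zeta_iter W \<gamma> n = zeta_map W \<gamma> \<zeta>"
  proof (cases n)
    case 0
    have "nonpos_Im (\<lambda>_ _. 0)"
      by (simp add: nonpos_Im_def)
    with 0 show thesis
      using that[of "\<lambda>_ _. 0"] by (simp add: zeta_iter_def)
  next
    case (Suc m)
    then show thesis
      using that[OF nonpos_Im_zeta_iter[OF assms]] by (simp add: zeta_iter_Suc)
  qed
  then show "cmod (zeta_iter W \<gamma> n x y) \<le> 1 / Im \<gamma>" "- Im (zeta_iter W \<gamma> n x y) > 0"
    using norm_zeta_map_le neg_Im_zeta_map_pos assms by auto
qed

lemma zeta_iter_increment_sq_le:
  assumes \<gamma>: "Im \<gamma> > 0"
  obtains Q where "Q \<ge> 0" and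
    "\<And>n x y. E x y \<Longrightarrow> (cmod (zeta_iter W \<gamma> (Suc n) x y - zeta_iter W \<gamma> n x y))\<^sup>2
       \<le> contraction_factor \<gamma> ^ (2 * n) * Q * (- Im (zeta_iter W \<gamma> (Suc n) x y)) * (- Im (zeta_iter W \<gamma> n x y))"
proof -
  let ?s = "zeta_iter W \<gamma>"
  define r where "r = (\<lambda>(x, y). (cmod (?s 1 x y - ?s 0 x y))\<^sup>2 / ((- Im (?s 1 x y)) * (- Im (?s 0 x y))))"
  define Q where "Q = (\<Sum>e\<in>{(x, y). E x y}. r e)"
  have r_nonneg: "r e \<ge> 0" for e
    using zeta_iter_bounds(2)[OF \<gamma>]
    by (auto simp: r_def split: prod.split intro!: divide_nonneg_pos mult_neg_neg)
  have "Q \<ge> 0"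
    unfolding Q_def using r_nonneg by (intro sum_nonneg) auto
  moreover have "(cmod (?s (Suc n) x y - ?s n x y))\<^sup>2
      \<le> contraction_factor \<gamma> ^ (2 * n) * Q * (- Im (?s (Suc n) x y)) * (- Im (?s n x y))"
    if "E x y" for n x y
    using that
  proof (induction n arbitrary: x y)
    case 0
    have "r (x, y) \<le> Q"
      unfolding Q_def using 0 finite_edges r_nonneg by (intro member_le_sum) auto
    moreover have "(- Im (?s 1 x y)) * (- Im (?s 0 x y)) > 0"
      using zeta_iter_bounds(2)[OF \<gamma>] by (intro mult_pos_pos)
    ultimately show ?case
      by (simp add: r_def pos_divide_le_eq mult.assoc)
  next
    case (Suc n)
    have "0 \<le> contraction_factor \<gamma> ^ (2 * n) * Q"
      using contraction_factor_bounds[OF \<gamma>] \<open>Q \<ge> 0\<close> by simp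
    then show ?case
      using zeta_map_contraction[OF nonpos_Im_zeta_iter[OF \<gamma>] nonpos_Im_zeta_iter[OF \<gamma>] \<gamma>
          zeta_iter_bounds(1)[OF \<gamma>] zeta_iter_bounds(1)[OF \<gamma>] Suc.IH, where W = W]
      by (simp add: zeta_iter_Suc power_add power2_eq_square algebra_simps)
  qed
  ultimately show thesis
    using that by blast
qed

lemma zeta_iter_increment_le:
  assumes \<gamma>: "Im \<gamma> > 0"
  obtains C where "\<And>n x y. E x y \<Longrightarrow>
    cmod (zeta_iter W \<gamma> (Suc n) x y - zeta_iter W \<gamma> n x y) \<le> contraction_factor \<gamma> ^ n * C"
proof -
  let ?s = "zeta_iter W \<gamma>" and ?\<kappa> = "contraction_factor \<gamma>"
  obtain Q where Q: "Q \<ge> 0" and inc: "\<And>n x y. E x y \<Longrightarrow> (cmod (?s (Suc n) x y - ?s n x y))\<^sup>2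
       \<le> ?\<kappa> ^ (2 * n) * Q * (- Im (?s (Suc n) x y)) * (- Im (?s n x y))"
    using zeta_iter_increment_sq_le[OF \<gamma>] by blast
  have "cmod (?s (Suc n) x y - ?s n x y) \<le> ?\<kappa> ^ n * (sqrt Q / Im \<gamma>)" if "E x y" for n x y
  proof (rule power2_le_imp_le)
    have neg_Im_le: "- Im (?s m x y) \<le> 1 / Im \<gamma>" for m
      using zeta_iter_bounds(1)[OF \<gamma>, of W m x y] abs_Im_le_cmod[of "?s m x y"] by linarith
    have "(- Im (?s (Suc n) x y)) * (- Im (?s n x y)) \<le> (1 / Im \<gamma>) * (1 / Im \<gamma>)"
      using \<gamma> zeta_iter_bounds(2)[OF \<gamma>, of W n x y] by (intro mult_mono neg_Im_le) simp_all
    moreover have "0 \<le> ?\<kappa> ^ (2 * n) * Q"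
      using contraction_factor_bounds[OF \<gamma>] Q by simp
    ultimately have "?\<kappa> ^ (2 * n) * Q * ((- Im (?s (Suc n) x y)) * (- Im (?s n x y)))
        \<le> ?\<kappa> ^ (2 * n) * Q * ((1 / Im \<gamma>) * (1 / Im \<gamma>))"
      by (rule mult_left_mono)
    also have "\<dots> = (?\<kappa> ^ n * (sqrt Q / Im \<gamma>))\<^sup>2"
      using Q by (simp add: power_even_eq power_mult_distrib power_divide power2_eq_square)
    finally show "(cmod (?s (Suc n) x y - ?s n x y))\<^sup>2 \<le> (?\<kappa> ^ n * (sqrt Q / Im \<gamma>))\<^sup>2"
      using inc[OF that] by (simp only: mult.assoc) (meson order.trans)
    show "0 \<le> ?\<kappa> ^ n * (sqrt Q / Im \<gamma>)"
      using contraction_factor_bounds[OF \<gamma>] Q \<gamma> by simp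
  qed
  then show thesis
    using that by blast
qed

lemma convergent_zeta_iter:
  assumes \<gamma>: "Im \<gamma> > 0" and "E x y"
  shows "convergent (\<lambda>n. zeta_iter W \<gamma> n x y)"
proof -
  let ?s = "zeta_iter W \<gamma>"
  obtain C where C: "\<And>n. cmod (?s (Suc n) x y - ?s n x y) \<le> contraction_factor \<gamma> ^ n * C"
    using zeta_iter_increment_le[OF \<gamma>] \<open>E x y\<close> by metis
  have "summable (\<lambda>n. contraction_factor \<gamma> ^ n * C)"
    using contraction_factor_bounds[OF \<gamma>] by (intro summable_mult2 summable_geometric) simp
  then have "summable (\<lambda>n. ?s (Suc n) x y - ?s n x y)"
    by (rule summable_norm_cancel[OF summable_comparison_test'[where N = 0]]) (simp_all add: C)
  then have "convergent (\<lambda>n. (\<Sum>k<n. ?s (Suc k) x y - ?s k x y) + ?s 0 x y)"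
    by (intro convergent_add convergent_const) (simp add: summable_iff_convergent)
  then show ?thesis
    by (simp add: sum_lessThan_telescope[of "\<lambda>k. ?s k x y"])
qed

lemma zeta_fixpoint_exists:
  assumes \<gamma>: "Im \<gamma> > 0"
  obtains \<zeta> where "zeta_fixpoint W \<gamma> \<zeta>"
proof -
  let ?s = "zeta_iter W \<gamma>"
  define L where "L = (\<lambda>x y. lim (\<lambda>n. ?s n x y))"
  have lim_L: "(\<lambda>n. ?s n x y) \<longlonglongrightarrow> L x y" if "E x y" for x y
    using convergent_zeta_iter[OF \<gamma> that] unfolding L_def by (simp add: convergent_LIMSEQ_iff)
  have L_nonpos: "nonpos_Im L"
    unfolding nonpos_Im_def
  proof (intro allI impI)
    fix x y assume "E x y"
    have "Im (?s n x y) \<le> 0" for n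
      using nonpos_Im_zeta_iter[OF \<gamma>] \<open>E x y\<close> by (simp add: nonpos_Im_def)
    then show "Im (L x y) \<le> 0"
      using tendsto_Im[OF lim_L[OF \<open>E x y\<close>]] by (meson LIMSEQ_le_const2)
  qed
  have "L x y = zeta_map W \<gamma> L x y" if "E x y" for x y
  proof -
    have "(\<lambda>n. zeta_den W \<gamma> (?s n) x y) \<longlonglongrightarrow> zeta_den W \<gamma> L x y"
      unfolding zeta_den_def using children_edge by (intro tendsto_intros lim_L) auto
    then have "(\<lambda>n. zeta_map W \<gamma> (?s n) x y) \<longlonglongrightarrow> zeta_map W \<gamma> L x y"
      unfolding zeta_map_def using zeta_den_nonzero[OF L_nonpos \<gamma>] by (intro tendsto_intros)
    then have "(\<lambda>n. ?s (Suc n) x y) \<longlonglongrightarrow> zeta_map W \<gamma> L x y"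
      by (simp add: zeta_iter_Suc)
    then show ?thesis
      using LIMSEQ_unique[OF lim_L[OF that] LIMSEQ_imp_Suc] by blast
  qed
  then show thesis
    using that L_nonpos by (auto simp: zeta_fixpoint_def)
qed

section \<open>The resolvent on a branch\<close>

lemma zeta_fixpoint_nonzero:
  assumes "zeta_fixpoint W \<gamma> \<zeta>" "Im \<gamma> > 0" "E x y"
  shows "\<zeta> x y \<noteq> 0"
  using assms zeta_den_nonzero by (auto simp: zeta_fixpoint_def zeta_map_def)

lemma zeta_fixpoint_sum_children:
  assumes "zeta_fixpoint W \<gamma> \<zeta>" "Im \<gamma> > 0" "E x y"
  shows "(\<Sum>c\<in>children x y. \<zeta> c x) = \<gamma> - complex_of_real (W x) - 1 / \<zeta> x y"
  using assms zeta_den_nonzero by (auto simp: zeta_fixpoint_def zeta_map_def zeta_den_def)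

lemma zeta_fixpoint_neg_Im:
  assumes "zeta_fixpoint W \<gamma> \<zeta>" "Im \<gamma> > 0" "E x y"
  shows "- Im (\<zeta> x y) = (cmod (\<zeta> x y))\<^sup>2 * (Im \<gamma> + (\<Sum>c\<in>children x y. - Im (\<zeta> c x)))"
  using assms neg_Im_zeta_map by (auto simp: zeta_fixpoint_def Im_zeta_den)

text \<open>On a branch, the resolvent column of the root factorises along paths:
  every step from a vertex \<open>a\<close> to a child \<open>c\<close> contributes a factor \<open>\<zeta> c a\<close>.\<close>

definition branch_green :: "('a \<Rightarrow> 'a \<Rightarrow> complex) \<Rightarrow> 'a \<Rightarrow> 'a \<Rightarrow> 'a list \<Rightarrow> complex"
  where "branch_green \<zeta> y x p =
    (if p \<in> branch y x then - (\<Prod>j\<in>{1..<length p}. \<zeta> (p ! j) (p ! (j - 1))) else 0)"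

lemma branch_green_root: "E y x \<Longrightarrow> branch_green \<zeta> y x [y, x] = - \<zeta> x y"
  using branch_root by (simp add: branch_green_def)

lemma branch_green_snoc:
  assumes "p \<in> branch y x" "w \<in> tip_children p"
  shows "branch_green \<zeta> y x (p @ [w]) = branch_green \<zeta> y x p * \<zeta> w (last p)"
proof -
  have "p \<noteq> []"
    using branch_length[OF assms(1)] by auto
  then have "(\<Prod>j\<in>{1..<length (p @ [w])}. \<zeta> ((p @ [w]) ! j) ((p @ [w]) ! (j - 1)))
      = (\<Prod>j\<in>{1..<length p}. \<zeta> ((p @ [w]) ! j) ((p @ [w]) ! (j - 1))) * \<zeta> w (last p)"
    by (simp add: prod.atLeastLessThan_Suc nth_append last_conv_nth)
  also have "(\<Prod>j\<in>{1..<length p}. \<zeta> ((p @ [w]) ! j) ((p @ [w]) ! (j - 1)))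
      = (\<Prod>j\<in>{1..<length p}. \<zeta> (p ! j) (p ! (j - 1)))"
    by (intro prod.cong refl) (auto simp: nth_append)
  finally show ?thesis
    using assms branch_snoc_iff by (simp add: branch_green_def)
qed

lemma branch_green_equation:
  assumes fixed: "zeta_fixpoint W \<gamma> \<zeta>" and \<gamma>: "Im \<gamma> > 0" and "E y x" and p: "p \<in> branch y x"
  shows "(\<Sum>q\<in>{q \<in> branch y x. tree_adj E y p q}. branch_green \<zeta> y x q)
           + (complex_of_real (W (last p)) - \<gamma>) * branch_green \<zeta> y x p = (if p = [y, x] then 1 else 0)"
proof -
  let ?g = "branch_green \<zeta> y x" and ?l = "last p" and ?pr = "p ! (length p - 2)"
  have edge: "E ?l ?pr"
    using branch_last_edge[OF p] .
  have nonzero: "\<zeta> ?l ?pr \<noteq> 0"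
    using zeta_fixpoint_nonzero[OF fixed \<gamma> edge] .
  have "(\<Sum>w\<in>tip_children p. ?g (p @ [w])) = ?g p * (\<Sum>w\<in>children ?l ?pr. \<zeta> w ?l)"
    using branch_green_snoc[OF p] by (simp add: sum_distrib_left tip_children_def)
  also have "\<dots> = ?g p * (\<gamma> - complex_of_real (W ?l) - 1 / \<zeta> ?l ?pr)"
    using zeta_fixpoint_sum_children[OF fixed \<gamma> edge] by simp
  finally have lhs: "(\<Sum>q\<in>{q \<in> branch y x. tree_adj E y p q}. ?g q)
           + (complex_of_real (W ?l) - \<gamma>) * ?g p
        = (if 3 \<le> length p then ?g (butlast p) else 0) - ?g p / \<zeta> ?l ?pr"
    unfolding sum_branch_neighbours[OF p] by (simp add: field_simps)
  show ?thesis
  proof (cases "length p = 2")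
    case True
    then have "p = [y, x]"
      using branch_length_two p by blast
    then show ?thesis
      using lhs branch_green_root[OF \<open>E y x\<close>] nonzero by simp
  next
    case False
    then have long: "3 \<le> length p"
      using branch_length[OF p] by simp
    note bl = branch_butlast[OF p long]
    have "butlast p \<noteq> []"
      using long by (cases p rule: rev_cases) auto
    then have "last (butlast p) = ?pr"
      using long by (simp add: last_conv_nth nth_butlast numeral_2_eq_2)
    then have "?g p = ?g (butlast p) * \<zeta> ?l ?pr"
      using branch_green_snoc[OF bl(1) bl(3)] bl(2) by simp
    then show ?thesis
      using lhs long nonzero by auto
  qed
qed

definition sphere_mass :: "('a list \<Rightarrow> complex) \<Rightarrow> 'a \<Rightarrow> 'a \<Rightarrow> nat \<Rightarrow> real"
  where "sphere_mass h y x k = (\<Sum>p\<in>sphere y x k. (cmod (h p))\<^sup>2)"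

lemma sphere_mass_nonneg: "sphere_mass h y x k \<ge> 0"
  by (simp add: sphere_mass_def sum_nonneg)

lemma sum_sphere_mass: "(\<Sum>k=2..n. sphere_mass h y x k) = (\<Sum>p\<in>branch_upto y x n. (cmod (h p))\<^sup>2)"
  by (simp add: sphere_mass_def sum_branch_upto)

lemma l2_on_branch_iff:
  "(\<lambda>p. (cmod (h p))\<^sup>2) summable_on branch y x \<longleftrightarrow> (\<exists>B. \<forall>n. (\<Sum>k=2..n. sphere_mass h y x k) \<le> B)"
  by (simp add: sum_sphere_mass nonneg_summable_on_branch_iff)

definition green_sphere_energy :: "('a \<Rightarrow> 'a \<Rightarrow> complex) \<Rightarrow> complex \<Rightarrow> 'a \<Rightarrow> 'a \<Rightarrow> nat \<Rightarrow> real"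
  where "green_sphere_energy \<zeta> \<gamma> y x k = (\<Sum>p\<in>sphere y x k.
    (cmod (branch_green \<zeta> y x p))\<^sup>2 * (Im \<gamma> + (\<Sum>w\<in>tip_children p. - Im (\<zeta> w (last p)))))"

lemma green_sphere_energy_nonneg:
  assumes "zeta_fixpoint W \<gamma> \<zeta>" "Im \<gamma> > 0"
  shows "green_sphere_energy \<zeta> \<gamma> y x k \<ge> 0"
proof -
  have "Im \<gamma> + (\<Sum>w\<in>tip_children p. - Im (\<zeta> w (last p))) \<ge> 0" for p
    unfolding tip_children_def using assms children_edge
    by (intro add_nonneg_nonneg sum_nonneg) (auto simp: zeta_fixpoint_def nonpos_Im_def)
  then show ?thesis
    unfolding green_sphere_energy_def by (intro sum_nonneg mult_nonneg_nonneg) auto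
qed

text \<open>The identity \<open>zeta_fixpoint_neg_Im\<close>, summed over the children of each walk.\<close>

lemma green_sphere_energy_Suc:
  assumes fixed: "zeta_fixpoint W \<gamma> \<zeta>" and \<gamma>: "Im \<gamma> > 0" and "2 \<le> k"
  shows "green_sphere_energy \<zeta> \<gamma> y x (Suc k)
           = green_sphere_energy \<zeta> \<gamma> y x k - Im \<gamma> * sphere_mass (branch_green \<zeta> y x) y x k"
proof -
  let ?g = "branch_green \<zeta> y x"
  have "green_sphere_energy \<zeta> \<gamma> y x (Suc k)
      = (\<Sum>p\<in>sphere y x k. \<Sum>w\<in>tip_children p. (cmod (?g p))\<^sup>2 * (- Im (\<zeta> w (last p))))"
    unfolding green_sphere_energy_def sum_sphere_Suc[OF \<open>2 \<le> k\<close>]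
  proof (intro sum.cong refl)
    fix p w assume p: "p \<in> sphere y x k" and w: "w \<in> tip_children p"
    have "p \<in> branch y x"
      using p by (simp add: sphere_def)
    moreover from this have "p \<noteq> []"
      using branch_length by force
    moreover have "E w (last p)"
      using w children_edge by (simp add: tip_children_def)
    ultimately show "(cmod (?g (p @ [w])))\<^sup>2 * (Im \<gamma> + (\<Sum>c\<in>tip_children (p @ [w]). - Im (\<zeta> c (last (p @ [w])))))
        = (cmod (?g p))\<^sup>2 * (- Im (\<zeta> w (last p)))"
      using zeta_fixpoint_neg_Im[OF fixed \<gamma>] branch_green_snoc w
      by (simp add: tip_children_snoc norm_mult power_mult_distrib)
  qed
  also have "\<dots> = green_sphere_energy \<zeta> \<gamma> y x k - Im \<gamma> * sphere_mass ?g y x k"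
    by (simp add: green_sphere_energy_def sphere_mass_def sum_distrib_left sum_distrib_right
        algebra_simps sum_subtractf sum.distrib)
  finally show ?thesis .
qed

lemma branch_green_l2:
  assumes fixed: "zeta_fixpoint W \<gamma> \<zeta>" and \<gamma>: "Im \<gamma> > 0"
  shows "(\<lambda>p. (cmod (branch_green \<zeta> y x p))\<^sup>2) summable_on branch y x"
proof -
  let ?mass = "sphere_mass (branch_green \<zeta> y x) y x" and ?T = "green_sphere_energy \<zeta> \<gamma> y x"
  have telescope: "Im \<gamma> * (\<Sum>k=2..n. ?mass k) + ?T (Suc n) = ?T 2" if "2 \<le> n" for n
    using that
  proof (induction n rule: nat_induct_at_least)
    case base
    then show ?case
      using green_sphere_energy_Suc[OF fixed \<gamma>, of 2] by (simp add: numeral_2_eq_2)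
  next
    case (Suc n)
    then show ?case
      using green_sphere_energy_Suc[OF fixed \<gamma>, where k = "Suc n" and y = y and x = x]
      by (simp add: sum.cl_ivl_Suc distrib_left)
  qed
  have "Im \<gamma> * (\<Sum>k=2..n. ?mass k) \<le> ?T 2" for n
  proof (cases "2 \<le> n")
    case True
    then show ?thesis
      using telescope[OF True] green_sphere_energy_nonneg[OF fixed \<gamma>, of y x "Suc n"] by linarith
  qed (use green_sphere_energy_nonneg[OF fixed \<gamma>] in simp)
  then have "(\<Sum>k=2..n. ?mass k) \<le> ?T 2 / Im \<gamma>" for n
    using \<gamma> by (simp add: pos_le_divide_eq mult.commute)
  then show ?thesis
    unfolding l2_on_branch_iff by blast
qed

definition outward_flux :: "('a list \<Rightarrow> complex) \<Rightarrow> 'a \<Rightarrow> 'a \<Rightarrow> nat \<Rightarrow> complex"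
  where "outward_flux h y x k = (\<Sum>p\<in>sphere y x k. \<Sum>w\<in>tip_children p. cnj (h p) * h (p @ [w]))"

lemma sphere_empty: "k < 2 \<Longrightarrow> sphere y x k = {}"
  using branch_length by (force simp: sphere_def)

lemma vertex_energy_identity:
  assumes "p \<in> branch y x"
    and "(\<Sum>q\<in>{q \<in> branch y x. tree_adj E y p q}. h q) + (complex_of_real (W (last p)) - \<gamma>) * h p = 0"
  shows "Im \<gamma> * (cmod (h p))\<^sup>2 = Im (\<Sum>w\<in>tip_children p. cnj (h p) * h (p @ [w]))
           + (if 3 \<le> length p then Im (cnj (h p) * h (butlast p)) else 0)"
proof -
  let ?c = "complex_of_real (W (last p)) - \<gamma>"
  have "0 = cnj (h p) * ((\<Sum>q\<in>{q \<in> branch y x. tree_adj E y p q}. h q) + ?c * h p)"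
    using assms(2) by simp
  also have "\<dots> = (\<Sum>w\<in>tip_children p. cnj (h p) * h (p @ [w]))
      + (if 3 \<le> length p then cnj (h p) * h (butlast p) else 0) + ?c * (h p * cnj (h p))"
    unfolding sum_branch_neighbours[OF assms(1)] by (simp add: distrib_left sum_distrib_left ac_simps)
  finally show ?thesis
    unfolding complex_norm_square[symmetric] by (cases "3 \<le> length p") (auto dest: arg_cong[of _ _ Im])
qed

lemma energy_identity:
  assumes eq: "\<And>p. p \<in> branch y x \<Longrightarrow>
      (\<Sum>q\<in>{q \<in> branch y x. tree_adj E y p q}. h q) + (complex_of_real (W (last p)) - \<gamma>) * h p = 0"
    and "2 \<le> n"
  shows "Im \<gamma> * (\<Sum>k=2..n. sphere_mass h y x k) = Im (outward_flux h y x n)"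
proof -
  define inward where "inward = (\<lambda>k. \<Sum>p\<in>sphere y x k. if 3 \<le> length p then Im (cnj (h p) * h (butlast p)) else 0)"
  have "Im \<gamma> * (cmod (h p))\<^sup>2 = Im (\<Sum>w\<in>tip_children p. cnj (h p) * h (p @ [w]))
           + (if 3 \<le> length p then Im (cnj (h p) * h (butlast p)) else 0)" if "p \<in> branch y x" for p
    using vertex_energy_identity[where h = h and W = W and \<gamma> = \<gamma>, OF that eq[OF that]] .
  then have sphere: "Im \<gamma> * sphere_mass h y x k = Im (outward_flux h y x k) + inward k" for k
    by (simp add: sphere_mass_def outward_flux_def inward_def sum_distrib_left sphere_def Im_sum
        sum.distrib[symmetric])
  have inward_2: "inward 2 = 0"
    by (simp add: inward_def sphere_def)
  have inward_Suc: "inward (Suc k) = - Im (outward_flux h y x k)" if "2 \<le> k" for k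
  proof -
    have "inward (Suc k) = (\<Sum>p\<in>sphere y x k. \<Sum>w\<in>tip_children p. Im (cnj (h (p @ [w])) * h p))"
      unfolding inward_def sum_sphere_Suc[OF that] using that by (simp add: sphere_def)
    also have "\<dots> = - Im (outward_flux h y x k)"
      by (simp add: outward_flux_def Im_sum sum_negf[symmetric] mult.commute)
    finally show ?thesis .
  qed
  show ?thesis
    using \<open>2 \<le> n\<close>
  proof (induction n rule: nat_induct_at_least)
    case base
    then show ?case using sphere[of 2] inward_2 by simp
  next
    case (Suc n)
    then show ?case using sphere[of "Suc n"] inward_Suc by (simp add: sum.cl_ivl_Suc distrib_left)
  qed
qed

lemma outward_flux_le:
  assumes "2 \<le> n"
  shows "Im (outward_flux h y x n) \<le> card V * sphere_mass h y x n + sphere_mass h y x (Suc n)"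
proof -
  have mult_le_sum_squares: "a * b \<le> a\<^sup>2 + b\<^sup>2" if "0 \<le> a" "0 \<le> b" for a b :: real
    using sum_squares_bound[of a b] mult_nonneg_nonneg[OF that] by linarith
  have "Im (outward_flux h y x n) \<le> (\<Sum>p\<in>sphere y x n. \<Sum>w\<in>tip_children p. cmod (h p) * cmod (h (p @ [w])))"
    unfolding outward_flux_def
    by (rule order.trans[OF abs_Im_le_cmod[THEN abs_le_D1]], rule order.trans[OF norm_sum sum_mono],
        rule order.trans[OF norm_sum]) (simp add: norm_mult)
  also have "\<dots> \<le> (\<Sum>p\<in>sphere y x n. \<Sum>w\<in>tip_children p. (cmod (h p))\<^sup>2 + (cmod (h (p @ [w])))\<^sup>2)"
    by (intro sum_mono mult_le_sum_squares norm_ge_zero)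
  also have "\<dots> = (\<Sum>p\<in>sphere y x n. card (tip_children p) * (cmod (h p))\<^sup>2) + sphere_mass h y x (Suc n)"
    unfolding sphere_mass_def sum_sphere_Suc[OF assms] by (simp add: sum.distrib)
  also have "(\<Sum>p\<in>sphere y x n. card (tip_children p) * (cmod (h p))\<^sup>2) \<le> card V * sphere_mass h y x n"
    unfolding sphere_mass_def sum_distrib_left
    by (intro sum_mono mult_right_mono) (auto simp: tip_children_def card_children_le)
  finally show ?thesis
    by simp
qed

lemma sphere_mass_tendsto_zero:
  assumes "(\<lambda>p. (cmod (h p))\<^sup>2) summable_on branch y x"
  shows "sphere_mass h y x \<longlonglongrightarrow> 0"
proof -
  obtain B where B: "\<And>n. (\<Sum>k=2..n. sphere_mass h y x k) \<le> B"
    using assms unfolding l2_on_branch_iff by blast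
  have "(\<Sum>k<n. sphere_mass h y x k) \<le> B" for n
  proof -
    have "(\<Sum>k<n. sphere_mass h y x k) \<le> (\<Sum>k\<le>n. sphere_mass h y x k)"
      by (intro sum_mono2) (auto simp: sphere_mass_nonneg)
    also have "\<dots> = (\<Sum>k=2..n. sphere_mass h y x k)"
      by (rule sum.mono_neutral_right) (auto simp: sphere_mass_def sphere_empty)
    finally show ?thesis
      using B by (rule order.trans)
  qed
  then show ?thesis
    by (intro summable_LIMSEQ_zero summableI_nonneg_bounded sphere_mass_nonneg)
qed

text \<open>By the energy identity, \<open>Im \<gamma>\<close> times the mass inside
  the sphere of radius \<open>n\<close> is bounded by the mass on the spheres of radius \<open>n\<close> and \<open>n + 1\<close>,
  which tends to zero.\<close>

lemma l2_homogeneous_solution_zero: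
  assumes \<gamma>: "Im \<gamma> > 0" and l2: "(\<lambda>p. (cmod (h p))\<^sup>2) summable_on branch y x"
    and eq: "\<And>p. p \<in> branch y x \<Longrightarrow>
      (\<Sum>q\<in>{q \<in> branch y x. tree_adj E y p q}. h q) + (complex_of_real (W (last p)) - \<gamma>) * h p = 0"
    and p: "p \<in> branch y x"
  shows "h p = 0"
proof -
  let ?mass = "sphere_mass h y x"
  have "?mass \<longlonglongrightarrow> 0"
    by (rule sphere_mass_tendsto_zero[OF l2])
  then have bound_lim: "(\<lambda>n. card V * ?mass n + ?mass (Suc n)) \<longlonglongrightarrow> 0"
    using tendsto_add[OF tendsto_mult_right_zero LIMSEQ_Suc] by fastforce
  define m where "m = length p"
  have m: "2 \<le> m"
    using branch_length[OF p] by (simp add: m_def)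
  have "Im \<gamma> * (\<Sum>k=2..m. ?mass k) \<le> card V * ?mass n + ?mass (Suc n)" if "m \<le> n" for n
  proof -
    have "Im \<gamma> * (\<Sum>k=2..m. ?mass k) \<le> Im \<gamma> * (\<Sum>k=2..n. ?mass k)"
      using that \<gamma> by (intro mult_left_mono sum_mono2) (auto simp: sphere_mass_nonneg)
    also have "\<dots> = Im (outward_flux h y x n)"
      using energy_identity[OF eq] that m by simp
    also have "\<dots> \<le> card V * ?mass n + ?mass (Suc n)"
      using outward_flux_le that m by simp
    finally show ?thesis .
  qed
  then have "Im \<gamma> * (\<Sum>k=2..m. ?mass k) \<le> 0"
    by (intro LIMSEQ_le_const[OF bound_lim]) auto
  moreover have "(cmod (h p))\<^sup>2 \<le> ?mass m"
    unfolding sphere_mass_def using p finite_sphere by (intro member_le_sum) (auto simp: sphere_def m_def)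
  moreover have "?mass m \<le> (\<Sum>k=2..m. ?mass k)"
    using m sphere_mass_nonneg by (intro member_le_sum) auto
  ultimately show "h p = 0"
    using \<gamma> by (smt (verit) mult_pos_pos zero_less_power2 zero_less_norm_iff)
qed

lemma tree_green_branch:
  assumes fixed: "zeta_fixpoint W \<gamma> \<zeta>" and \<gamma>: "Im \<gamma> > 0" and "E y x"
  shows "tree_green E W y (branch y x) \<gamma> [y, x] = - \<zeta> x y"
proof -
  let ?g = "branch_green \<zeta> y x"
  define P where "P = (\<lambda>g::'a list \<Rightarrow> complex. (\<forall>q. q \<notin> branch y x \<longrightarrow> g q = 0) \<and>
     (\<lambda>q. (cmod (g q))\<^sup>2) summable_on branch y x \<and>
     (\<forall>q\<in>branch y x. (\<Sum>q'\<in>{q' \<in> branch y x. tree_adj E y q q'}. g q')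
        + (complex_of_real (W (last q)) - \<gamma>) * g q = (if q = [y, x] then 1 else 0)))"
  have "P ?g"
    using branch_green_l2[OF fixed \<gamma>] branch_green_equation[OF fixed \<gamma> \<open>E y x\<close>]
    by (simp add: P_def branch_green_def)
  moreover have "g p = ?g p" if "P g" for g p
  proof (cases "p \<in> branch y x")
    case False
    then show ?thesis using \<open>P g\<close> \<open>P ?g\<close> by (simp add: P_def)
  next
    case True
    let ?h = "\<lambda>q. g q - ?g q"
    have "(\<lambda>q. (cmod (?h q))\<^sup>2) summable_on branch y x"
      using \<open>P g\<close> \<open>P ?g\<close> by (intro norm_diff_sq_summable_on) (simp_all add: P_def)
    moreover have "(\<Sum>q\<in>{q \<in> branch y x. tree_adj E y p' q}. ?h q)
        + (complex_of_real (W (last p')) - \<gamma>) * ?h p' = 0" if "p' \<in> branch y x" for p'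
      using \<open>P g\<close> \<open>P ?g\<close> that by (simp add: P_def sum_subtractf algebra_simps)
    ultimately have "?h p = 0"
      using True by (rule l2_homogeneous_solution_zero[OF \<gamma>])
    then show ?thesis
      by simp
  qed
  ultimately have "(THE g. P g) = ?g"
    by (intro the_equality) auto
  then show ?thesis
    using branch_green_root[OF \<open>E y x\<close>] by (simp add: tree_green_def P_def)
qed

lemma zeta_eq_fixpoint:
  assumes "zeta_fixpoint W \<gamma> \<zeta>" "Im \<gamma> > 0" "E x y"
  shows "zeta E W \<gamma> x y = \<zeta> x y"
  using tree_green_branch[OF assms(1,2) edge_sym[OF assms(3)]] tree_branch_eq_branch[OF edge_sym[OF assms(3)]]
  by (simp add: zeta_def)

lemma zeta_recursion:
  assumes \<gamma>: "Im \<gamma> > 0" and "E x y"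
  shows "zeta E W \<gamma> x y * (\<gamma> - complex_of_real (W x) - (\<Sum>c\<in>children x y. zeta E W \<gamma> c x)) = 1"
    and "Im (zeta E W \<gamma> x y) \<le> 0"
proof -
  obtain \<zeta> where fixed: "zeta_fixpoint W \<gamma> \<zeta>"
    using zeta_fixpoint_exists[OF \<gamma>] .
  have "(\<Sum>c\<in>children x y. zeta E W \<gamma> c x) = (\<Sum>c\<in>children x y. \<zeta> c x)"
    using zeta_eq_fixpoint[OF fixed \<gamma> children_edge] by simp
  then show "zeta E W \<gamma> x y * (\<gamma> - complex_of_real (W x) - (\<Sum>c\<in>children x y. zeta E W \<gamma> c x)) = 1"
    using zeta_eq_fixpoint[OF fixed \<gamma> \<open>E x y\<close>] zeta_fixpoint_sum_children[OF fixed \<gamma> \<open>E x y\<close>]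
      zeta_fixpoint_nonzero[OF fixed \<gamma> \<open>E x y\<close>] by simp
  show "Im (zeta E W \<gamma> x y) \<le> 0"
    using zeta_eq_fixpoint[OF fixed \<gamma> \<open>E x y\<close>] fixed \<open>E x y\<close>
    unfolding zeta_fixpoint_def nonpos_Im_def by metis
qed

end

section \<open>Boundary values in the bulk spectrum\<close>

lemma zeta_bv_limit:
  assumes "lam \<in> bulk_spectrum E W" "E x y"
  shows "((\<lambda>\<eta>. zeta E W (complex_of_real lam + \<i> * complex_of_real \<eta>) x y) \<longlongrightarrow> zeta_bv E W lam x y)
           (at_right 0)"
    and "Im (zeta_bv E W lam x y) \<noteq> 0"
proof -
  obtain L where L: "((\<lambda>\<eta>. zeta E W (complex_of_real lam + \<i> * complex_of_real \<eta>) x y) \<longlongrightarrow> L) (at_right 0)"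
    "Im L \<noteq> 0"
    using assms unfolding bulk_spectrum_def by blast
  moreover from L(1) have "zeta_bv E W lam x y = L"
    unfolding zeta_bv_def by (rule tendsto_Lim[rotated]) simp
  ultimately show "((\<lambda>\<eta>. zeta E W (complex_of_real lam + \<i> * complex_of_real \<eta>) x y) \<longlongrightarrow> zeta_bv E W lam x y)
      (at_right 0)" "Im (zeta_bv E W lam x y) \<noteq> 0"
    by simp_all
qed

context finite_graph
begin

lemma zeta_bv_recursion:
  assumes lam: "lam \<in> bulk_spectrum E W" and "E x y"
  shows "zeta_bv E W lam x y * (complex_of_real lam - complex_of_real (W x)
            - (\<Sum>c\<in>children x y. zeta_bv E W lam c x)) = 1"
proof -
  let ?\<gamma> = "\<lambda>\<eta>::real. complex_of_real lam + \<i> * complex_of_real \<eta>"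
  define f where "f = (\<lambda>\<eta>. zeta E W (?\<gamma> \<eta>) x y
    * (?\<gamma> \<eta> - complex_of_real (W x) - (\<Sum>c\<in>children x y. zeta E W (?\<gamma> \<eta>) c x)))"
  have "(?\<gamma> \<longlongrightarrow> complex_of_real lam + \<i> * complex_of_real 0) (at_right 0)"
    by (intro tendsto_intros)
  then have "(?\<gamma> \<longlongrightarrow> complex_of_real lam) (at_right 0)"
    by simp
  then have "(f \<longlongrightarrow> zeta_bv E W lam x y * (complex_of_real lam - complex_of_real (W x)
            - (\<Sum>c\<in>children x y. zeta_bv E W lam c x))) (at_right 0)"
    unfolding f_def using \<open>E x y\<close> children_edge
    by (intro tendsto_mult tendsto_diff tendsto_sum tendsto_const zeta_bv_limit(1)[OF lam]) auto
  moreover have "(f \<longlongrightarrow> 1) (at_right 0)"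
    using eventually_at_right_less[of 0]
    by (intro tendsto_eventually, eventually_elim) (simp add: f_def zeta_recursion(1)[OF _ \<open>E x y\<close>])
  ultimately show ?thesis
    by (rule tendsto_unique[OF trivial_limit_at_right_real])
qed

lemma Im_zeta_bv_neg:
  assumes lam: "lam \<in> bulk_spectrum E W" and "E x y"
  shows "Im (zeta_bv E W lam x y) < 0"
proof -
  have "((\<lambda>\<eta>. Im (zeta E W (complex_of_real lam + \<i> * complex_of_real \<eta>) x y)) \<longlongrightarrow> Im (zeta_bv E W lam x y))
      (at_right 0)"
    using zeta_bv_limit(1)[OF assms] by (rule tendsto_Im)
  moreover have "eventually (\<lambda>\<eta>. Im (zeta E W (complex_of_real lam + \<i> * complex_of_real \<eta>) x y) \<le> 0) (at_right 0)"
    using eventually_at_right_less[of 0] by eventually_elim (simp add: zeta_recursion(2)[OF _ \<open>E x y\<close>])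
  ultimately have "Im (zeta_bv E W lam x y) \<le> 0"
    by (rule tendsto_upperbound) simp
  then show ?thesis
    using zeta_bv_limit(2)[OF assms] by simp
qed

lemma neg_Im_zeta_bv:
  assumes lam: "lam \<in> bulk_spectrum E W" and "E x y"
  shows "- Im (zeta_bv E W lam x y)
           = (cmod (zeta_bv E W lam x y))\<^sup>2 * (\<Sum>c\<in>children x y. - Im (zeta_bv E W lam c x))"
proof -
  define d where "d = complex_of_real lam - complex_of_real (W x) - (\<Sum>c\<in>children x y. zeta_bv E W lam c x)"
  have "zeta_bv E W lam x y * d = 1"
    using zeta_bv_recursion[OF assms] by (simp add: d_def)
  then have "d \<noteq> 0"
    by auto
  with \<open>zeta_bv E W lam x y * d = 1\<close> have "zeta_bv E W lam x y = 1 / d"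
    by (simp add: field_simps)
  moreover have "Im d = (\<Sum>c\<in>children x y. - Im (zeta_bv E W lam c x))"
    by (simp add: d_def Im_sum sum_negf)
  ultimately show ?thesis
    using Im_inverse_eq_norm_sq[OF \<open>d \<noteq> 0\<close>] by simp
qed

lemma z_lambda_eq_Min:
  assumes "lam \<in> bulk_spectrum E W"
  shows "z_lambda E W lam = Min ((\<lambda>(x, y). - Im (zeta_bv E W lam x y)) ` {(x, y). E x y})"
proof -
  have "{\<bar>Im (zeta_bv E W lam x y)\<bar> | x y. E x y} = (\<lambda>(x, y). - Im (zeta_bv E W lam x y)) ` {(x, y). E x y}"
    using Im_zeta_bv_neg[OF assms] by (force simp: image_iff)
  then show ?thesis
    by (simp add: z_lambda_def)
qed

lemma z_lambda_le_neg_Im: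
  "lam \<in> bulk_spectrum E W \<Longrightarrow> E x y \<Longrightarrow> z_lambda E W lam \<le> - Im (zeta_bv E W lam x y)"
  unfolding z_lambda_eq_Min using finite_edges by (intro Min_le) auto

lemma z_lambda_pos:
  assumes "lam \<in> bulk_spectrum E W" "E x y"
  shows "z_lambda E W lam > 0"
proof -
  have "z_lambda E W lam \<in> (\<lambda>(x, y). - Im (zeta_bv E W lam x y)) ` {(x, y). E x y}"
    unfolding z_lambda_eq_Min[OF assms(1)] using finite_edges assms(2) by (intro Min_in) auto
  then show ?thesis
    using Im_zeta_bv_neg[OF assms(1)] by auto
qed

end

section \<open>Products along a cycle\<close>

definition cyclic_succ :: "nat \<Rightarrow> nat \<Rightarrow> nat"
  where "cyclic_succ m i = (if i < m then Suc i else 0)"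

lemma cyclic_succ_le: "i \<le> m \<Longrightarrow> cyclic_succ m i \<le> m"
  by (simp add: cyclic_succ_def)

lemma bij_betw_cyclic_succ: "bij_betw (cyclic_succ m) {..m} {..m}"
  by (rule bij_betw_byWitness[where f' = "\<lambda>j. if j = 0 then m else j - 1"]) (auto simp: cyclic_succ_def)

lemma prod_cyclic_succ: "(\<Prod>i<m. f (Suc i) i) * f 0 m = (\<Prod>i\<le>m. f (cyclic_succ m i) i)"
proof -
  have "(\<Prod>i<m. f (Suc i) i) = (\<Prod>i<m. f (cyclic_succ m i) i)"
    by (rule prod.cong) (auto simp: cyclic_succ_def)
  then show ?thesis
    by (simp add: lessThan_Suc_atMost[symmetric] cyclic_succ_def)
qed

lemma cycle_edge: "is_cycle E u m \<Longrightarrow> i \<le> m \<Longrightarrow> E (u i) (u (cyclic_succ m i))"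
  by (auto simp: is_cycle_def cyclic_succ_def)

lemma prod_le_of_cyclic_ratio:
  fixes \<alpha> b :: "'i \<Rightarrow> real"
  assumes "finite I" "bij_betw \<sigma> I I" "k \<in> I" "d \<ge> 0"
    and pos: "\<And>i. i \<in> I \<Longrightarrow> \<alpha> i > 0" and nonneg: "\<And>i. i \<in> I \<Longrightarrow> b i \<ge> 0"
    and ratio: "\<And>i. i \<in> I \<Longrightarrow> b i * (\<alpha> (\<sigma> i) + (if i = k then d else 0)) \<le> \<alpha> i"
  shows "(\<Prod>i\<in>I. b i) * (\<alpha> (\<sigma> k) + d) \<le> \<alpha> (\<sigma> k)"
proof -
  define R where "R = (\<Prod>i\<in>I - {k}. \<alpha> (\<sigma> i))"
  have \<sigma>: "\<sigma> i \<in> I" if "i \<in> I" for i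
    using assms(2) that by (auto simp: bij_betw_def)
  have "(\<Prod>i\<in>I. b i) * ((\<alpha> (\<sigma> k) + d) * R) = (\<Prod>i\<in>I. b i * (\<alpha> (\<sigma> i) + (if i = k then d else 0)))"
    by (simp add: prod.distrib prod.remove[OF assms(1,3)] R_def)
  also have "\<dots> \<le> (\<Prod>i\<in>I. \<alpha> i)"
  proof (intro prod_mono conjI ratio)
    show "0 \<le> b i * (\<alpha> (\<sigma> i) + (if i = k then d else 0))" if "i \<in> I" for i
      using pos[OF \<sigma>[OF that]] nonneg[OF that] \<open>d \<ge> 0\<close> by simp
  qed
  also have "\<dots> = (\<Prod>i\<in>I. \<alpha> (\<sigma> i))"
    by (rule prod.reindex_bij_betw[OF assms(2), symmetric])
  also have "\<dots> = \<alpha> (\<sigma> k) * R"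
    by (simp add: prod.remove[OF assms(1,3)] R_def)
  finally have "((\<Prod>i\<in>I. b i) * (\<alpha> (\<sigma> k) + d)) * R \<le> \<alpha> (\<sigma> k) * R"
    by (simp add: mult.assoc)
  moreover have "R > 0"
    unfolding R_def using pos \<sigma> by (intro prod_pos) auto
  ultimately show ?thesis
    by simp
qed

text \<open>\<open>r\<^sup>2 \<le> t / (t + z) \<le> 1 / (1 + z\<^sup>2)\<close>, and \<open>(1 - s/4)\<^sup>2 (1 + s) \<ge> 1\<close>
  for \<open>0 \<le> s \<le> 1\<close>.\<close>

lemma le_one_minus_quarter_sq:
  fixes r t z :: real
  assumes "0 \<le> r" "0 < z" "z \<le> t" "t * z \<le> 1" "r\<^sup>2 * (t + z) \<le> t"
  shows "r \<le> 1 - z\<^sup>2 / 4"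
proof (rule power2_le_imp_le)
  have "r\<^sup>2 * (1 + z\<^sup>2) * (t + z) \<le> t * (1 + z\<^sup>2)"
    using mult_right_mono[OF assms(5), of "1 + z\<^sup>2"] by (simp add: ac_simps)
  also have "\<dots> \<le> t + z"
    using mult_right_mono[OF assms(4) less_imp_le[OF assms(2)]] by (simp add: power2_eq_square algebra_simps)
  finally have "r\<^sup>2 * (1 + z\<^sup>2) \<le> 1"
    using assms(2,3) by simp
  have z_sq: "z\<^sup>2 \<le> 1"
    using assms(4) mult_right_mono[OF assms(3) less_imp_le[OF assms(2)]] by (simp add: power2_eq_square)
  have "1 \<le> (1 - z\<^sup>2 / 4)\<^sup>2 * (1 + z\<^sup>2)"
  proof -
    have "0 \<le> z\<^sup>2 * (8 - 7 * z\<^sup>2) + z\<^sup>2 * z\<^sup>2 * z\<^sup>2"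
      using z_sq by (intro add_nonneg_nonneg mult_nonneg_nonneg) auto
    also have "\<dots> = 16 * ((1 - z\<^sup>2 / 4)\<^sup>2 * (1 + z\<^sup>2)) - 16"
      by (simp add: power2_eq_square field_simps)
    finally show ?thesis
      by simp
  qed
  with \<open>r\<^sup>2 * (1 + z\<^sup>2) \<le> 1\<close> have "r\<^sup>2 * (1 + z\<^sup>2) \<le> (1 - z\<^sup>2 / 4)\<^sup>2 * (1 + z\<^sup>2)"
    by linarith
  then show "r\<^sup>2 \<le> (1 - z\<^sup>2 / 4)\<^sup>2"
    by (rule mult_right_le_imp_le) (simp add: add_pos_nonneg)
  show "0 \<le> 1 - z\<^sup>2 / 4"
    using z_sq by simp
qed

context finite_graph
begin

lemma cycle_child:
  assumes "is_cycle E u m" "i \<le> m"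
  shows "u (cyclic_succ m (cyclic_succ m i)) \<in> children (u (cyclic_succ m i)) (u i)"
proof -
  have "cyclic_succ m (cyclic_succ m i) \<noteq> i" "cyclic_succ m (cyclic_succ m i) \<le> m"
    using assms by (auto simp: is_cycle_def cyclic_succ_def)
  then have "u (cyclic_succ m (cyclic_succ m i)) \<noteq> u i"
    using assms by (auto simp: is_cycle_def inj_on_def)
  then show ?thesis
    using cycle_edge[OF assms(1) cyclic_succ_le[OF assms(2)]] by (simp add: children_def)
qed

lemma cycle_exit:
  assumes "graph_connected V E" "is_cycle E u m" "u ` {0..m} \<noteq> V"
  obtains k w where "k \<le> m" "w \<in> children (u (cyclic_succ m k)) (u k)" "w \<notin> u ` {0..m}"
proof -
  let ?C = "u ` {0..m}"
  have "?C \<subseteq> V"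
    using edge_vertices[OF cycle_edge[OF assms(2)]] by auto
  then obtain v where "v \<in> V" "v \<notin> ?C"
    using assms(3) by blast
  moreover have "u 0 \<in> V" "u 0 \<in> ?C"
    using \<open>?C \<subseteq> V\<close> by auto
  ultimately have "E\<^sup>*\<^sup>* (u 0) v"
    using assms(1) by (simp add: graph_connected_def)
  then obtain c w where "c \<in> ?C" "w \<notin> ?C" "E c w"
    using \<open>u 0 \<in> ?C\<close> \<open>v \<notin> ?C\<close> by (induction rule: rtranclp_induct) auto
  then obtain j where j: "j \<le> m" "c = u j"
    by auto
  define k where "k = (if j = 0 then m else j - 1)"
  have "k \<le> m" "cyclic_succ m k = j"
    using j by (auto simp: k_def cyclic_succ_def)
  moreover have "w \<noteq> u k"
    using \<open>w \<notin> ?C\<close> \<open>k \<le> m\<close> by auto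
  ultimately show thesis
    using that \<open>E c w\<close> \<open>w \<notin> ?C\<close> j by (simp add: children_def)
qed

lemma cycle_children_sum_ge:
  fixes a :: "'a \<Rightarrow> 'a \<Rightarrow> real"
  assumes cycle: "is_cycle E u m" "i \<le> m"
    and exit: "w \<in> children (u (cyclic_succ m k)) (u k)" "w \<notin> u ` {0..m}"
    and a_ge: "\<And>x y. E x y \<Longrightarrow> z \<le> a x y" and "0 \<le> z"
  shows "a (u (cyclic_succ m (cyclic_succ m i))) (u (cyclic_succ m i)) + (if i = k then z else 0)
           \<le> (\<Sum>c\<in>children (u (cyclic_succ m i)) (u i). a c (u (cyclic_succ m i)))"
proof -
  let ?v = "u (cyclic_succ m i)" and ?next = "u (cyclic_succ m (cyclic_succ m i))"
  have next_child: "?next \<in> children ?v (u i)"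
    using cycle_child[OF cycle] .
  have children_nonneg: "0 \<le> a c ?v" if "c \<in> children ?v (u i)" for c
    using a_ge[OF children_edge[OF that]] \<open>0 \<le> z\<close> by simp
  show ?thesis
  proof (cases "i = k")
    case True
    have "w \<noteq> ?next"
      using exit(2) cyclic_succ_le cycle(2) by auto
    then have "a ?next ?v + a w ?v = (\<Sum>c\<in>{?next, w}. a c ?v)"
      by simp
    also have "\<dots> \<le> (\<Sum>c\<in>children ?v (u i). a c ?v)"
      using next_child exit(1) True children_nonneg finite_children by (intro sum_mono2) auto
    finally show ?thesis
      using True a_ge[OF children_edge[OF exit(1)]] by simp
  next
    case False
    have "a ?next ?v \<le> (\<Sum>c\<in>children ?v (u i). a c ?v)"
      by (rule member_le_sum[OF next_child _ finite_children]) (simp add: children_nonneg)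
    then show ?thesis
      using False by simp
  qed
qed

lemma flow_mult_le_one:
  fixes Z :: "'a \<Rightarrow> 'a \<Rightarrow> complex"
  assumes flow: "- Im (Z x y) = (cmod (Z x y))\<^sup>2 * (\<Sum>c\<in>children x y. - Im (Z c x))"
    and "c \<in> children x y" and z_le: "\<And>c. c \<in> children x y \<Longrightarrow> z \<le> - Im (Z c x)"
    and "0 < z" "z \<le> - Im (Z x y)"
  shows "- Im (Z x y) * z \<le> 1"
proof -
  let ?a = "- Im (Z x y)"
  have "?a * ?a \<le> (cmod (Z x y))\<^sup>2"
    unfolding cmod_power2 by (simp add: power2_eq_square)
  then have "?a * ?a * z \<le> (cmod (Z x y))\<^sup>2 * z"
    using \<open>0 < z\<close> by (simp add: mult_right_mono)
  also have "\<dots> \<le> ?a"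
  proof -
    have nonneg: "0 \<le> - Im (Z c' x)" if "c' \<in> children x y" for c'
      using z_le[OF that] \<open>0 < z\<close> by linarith
    have "- Im (Z c x) \<le> (\<Sum>c\<in>children x y. - Im (Z c x))"
      by (rule member_le_sum[OF assms(2) _ finite_children]) (blast intro: nonneg)
    then have "z \<le> (\<Sum>c\<in>children x y. - Im (Z c x))"
      using z_le[OF assms(2)] by linarith
    then show ?thesis
      unfolding flow by (simp add: mult_left_mono)
  qed
  finally have "?a * (?a * z) \<le> ?a * 1"
    by (simp only: mult.assoc mult_1_right)
  then show ?thesis
    by (rule mult_left_le_imp_le) (use \<open>0 < z\<close> \<open>z \<le> ?a\<close> in linarith)
qed

lemma cycle_product_le:
  fixes Z :: "'a \<Rightarrow> 'a \<Rightarrow> complex"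
  assumes "graph_connected V E" and cycle: "is_cycle E u m" and "u ` {0..m} \<noteq> V"
    and flow: "\<And>x y. E x y \<Longrightarrow> - Im (Z x y) = (cmod (Z x y))\<^sup>2 * (\<Sum>c\<in>children x y. - Im (Z c x))"
    and "z > 0" and z_le: "\<And>x y. E x y \<Longrightarrow> z \<le> - Im (Z x y)"
  shows "cmod ((\<Prod>i<m. Z (u (Suc i)) (u i)) * Z (u 0) (u m)) \<le> 1 - z\<^sup>2 / 4"
proof -
  let ?\<sigma> = "cyclic_succ m"
  define \<alpha> where "\<alpha> i = - Im (Z (u (?\<sigma> i)) (u i))" for i
  define b where "b i = (cmod (Z (u (?\<sigma> i)) (u i)))\<^sup>2" for i
  obtain k w where k: "k \<le> m" and w: "w \<in> children (u (?\<sigma> k)) (u k)" "w \<notin> u ` {0..m}"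
    using cycle_exit[OF assms(1-3)] .
  have edge: "E (u (?\<sigma> i)) (u i)" if "i \<le> m" for i
    using edge_sym[OF cycle_edge[OF cycle that]] .
  have z_le_\<alpha>: "z \<le> \<alpha> i" if "i \<le> m" for i
    using z_le[OF edge[OF that]] by (simp add: \<alpha>_def)
  have "(\<Prod>i\<le>m. b i) * (\<alpha> (?\<sigma> k) + z) \<le> \<alpha> (?\<sigma> k)"
  proof (rule prod_le_of_cyclic_ratio[OF _ bij_betw_cyclic_succ])
    show "b i * (\<alpha> (?\<sigma> i) + (if i = k then z else 0)) \<le> \<alpha> i" if "i \<in> {..m}" for i
    proof -
      have i: "i \<le> m"
        using that by simp
      have "\<alpha> (?\<sigma> i) + (if i = k then z else 0) \<le> (\<Sum>c\<in>children (u (?\<sigma> i)) (u i). - Im (Z c (u (?\<sigma> i))))"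
        using cycle_children_sum_ge[OF cycle i w, where a = "\<lambda>x y. - Im (Z x y)"] z_le \<open>z > 0\<close>
        by (simp add: \<alpha>_def)
      then show ?thesis
        unfolding b_def \<alpha>_def[of i] flow[OF edge[OF i]] by (rule mult_left_mono) simp
    qed
    show "0 < \<alpha> i" if "i \<in> {..m}" for i
      using z_le_\<alpha> that \<open>z > 0\<close> by fastforce
  qed (use k \<open>z > 0\<close> in \<open>simp_all add: b_def\<close>)
  moreover have "\<alpha> (?\<sigma> k) * z \<le> 1"
    using flow_mult_le_one[OF flow[OF edge] cycle_child[OF cycle] z_le[OF children_edge] \<open>z > 0\<close>]
      z_le_\<alpha> cyclic_succ_le k by (simp add: \<alpha>_def)
  moreover have "(cmod ((\<Prod>i<m. Z (u (Suc i)) (u i)) * Z (u 0) (u m)))\<^sup>2 = (\<Prod>i\<le>m. b i)"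
    using prod_cyclic_succ[of "\<lambda>j i. Z (u j) (u i)"]
    by (simp add: b_def prod_norm[symmetric] prod_power_distrib)
  ultimately show ?thesis
    by (metis le_one_minus_quarter_sq[OF norm_ge_zero \<open>z > 0\<close> z_le_\<alpha>[OF cyclic_succ_le[OF k]]])
qed

end

theorem proposition3p2:
  fixes V :: "'a set" and E :: "'a \<Rightarrow> 'a \<Rightarrow> bool" and W :: "'a \<Rightarrow> real"
    and u :: "nat \<Rightarrow> 'a" and m :: nat and lam :: real
  assumes "fin_graph V E" and "graph_connected V E" and "min_degree_ge V E 2"
    and "is_cycle E u m" and "u ` {0..m} \<noteq> V"
    and "lam \<in> bulk_spectrum E W"
  shows "cmod ((\<Prod>i<m. zeta_bv E W lam (u (Suc i)) (u i)) * zeta_bv E W lam (u 0) (u m))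
           \<le> 1 - (z_lambda E W lam)\<^sup>2 / 4"
proof -
  interpret finite_graph V E
    using assms(1) by unfold_locales
  have "E (u m) (u 0)"
    using assms(4) by (simp add: is_cycle_def)
  then show ?thesis
    using cycle_product_le[OF assms(2,4,5) neg_Im_zeta_bv[OF assms(6)]]
      z_lambda_pos[OF assms(6)] z_lambda_le_neg_Im[OF assms(6)] by blast
qed

end
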